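(* Let $\mathcal{F}:(\mathcal{K},c)\to(\mathcal{K}',c')$ be a bilax functor with compatible Yang–Baxter operator, $b:A\to A$ a $c$-bimonad in $\mathcal{K}$, and $x:A\to B$ a right relative bimonad module over $b$ (right action $\lhd$, right coaction $\rho$). Then $\mathcal{F}(x)$, with right action $\mathcal{F}(\lhd)\cdot\mathcal{F}^2_{x,b}$ and right coaction $\mathcal{F}_{2;x,b}\cdot\mathcal{F}(\rho)$, is a right relative bimonad module over the $c'$-bimonad $\mathcal{F}(b)$ (with structure $\mu^{\mathcal{F}}=\mathcal{F}(\mu)\cdot\mathcal{F}^2_{b,b}$, $\eta^{\mathcal{F}}=\mathcal{F}(\eta)\cdot\mathcal{F}^0_A$, $\Delta^{\mathcal{F}}=\mathcal{F}_{2;b,b}\cdot\mathcal{F}(\Delta)$, $\varepsilon^{\mathcal{F}}=\mathcal{F}_{0;A}\cdot\mathcal{F}(\varepsilon)$).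
   Context: Conventions: $\circ$ horizontal composition, $\cdot$ vertical composition ($\beta\cdot\alpha$: first $\alpha$), $1$ identity 2-cells. A Yang–Baxter operator $c$ of a 2-category: natural 2-cells $c_{g,f}:g\circ f\Rightarrow f\circ g$ for 1-endocells of a common object, satisfying the Yang–Baxter equation $(c_{g,f}\circ1)\cdot(1\circ c_{h,f})\cdot(c_{h,g}\circ1)=(1\circ c_{h,g})\cdot(c_{h,f}\circ1)\cdot(1\circ c_{g,f})$ and $c_{\mathrm{id},f}=c_{f,\mathrm{id}}=1$. A $c$-bimonad: 1-endocell $b$ with monad $(\mu,\eta)$ and comonad $(\Delta,\varepsilon)$ such that $c_{b,b}$ is a left and right distributive law for both the monad and the comonad, and $(\mu\circ\mu)\cdot(1\circ c_{b,b}\circ1)\cdot(\Delta\circ\Delta)=\Delta\cdot\mu$, $\varepsilon\circ\varepsilon=\varepsilon\cdot\mu$, $\eta\circ\eta=\Delta\cdot\eta$, $\varepsilon\cdot\eta=1$. A bilax functor $\mathcal{F}$ is lax ($\mathcal{F}^2_{g,f}:\mathcal{F}(g)\circ\mathcal{F}(f)\Rightarrow\mathcal{F}(gf)$, $\mathcal{F}^0$) and colax ($\mathcal{F}_{2;g,f}:\mathcal{F}(gf)\Rightarrow\mathcal{F}(g)\circ\mathcal{F}(f)$, $\mathcal{F}_0$) with a Yang–Baxter operator $\nu$ which is a left and right distributive law for the lax and colax structures, satisfies the unit–counit laws, and the bilaxity conditions $(\mathcal{F}^2_{g,h}\circ\mathcal{F}^2_{f,k})\cdot(1\circ\nu_{f,h}\circ1)\cdot(\mathcal{F}_{2;g,f}\circ\mathcal{F}_{2;h,k})=\mathcal{F}_{2;gh,fk}\cdot\mathcal{F}(1\circ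 c_{f,h}\circ1)\cdot\mathcal{F}^2_{gf,hk}$ for $A\xrightarrow{k}B\xrightarrow{h}B\xrightarrow{f}B\xrightarrow{g}C$, $\mathcal{F}^0\circ\mathcal{F}^0=\mathcal{F}_{2;\mathrm{id},\mathrm{id}}\cdot\mathcal{F}^0$, $\mathcal{F}_0\circ\mathcal{F}_0=\mathcal{F}_0\cdot\mathcal{F}^2_{\mathrm{id},\mathrm{id}}$, $\mathcal{F}_0\cdot\mathcal{F}^0=1$; compatibility means $\nu_{f,g}=c'_{\mathcal{F}(f),\mathcal{F}(g)}$. A right relative bimonad module over $b$ is a 1-cell $x:A\to B$ that is a right $b$-module ($\lhd:x\circ b\Rightarrow x$, associative and unital) and a right $b$-comodule ($\rho:x\Rightarrow x\circ b$, coassociative and counital) such that $(\lhd\circ\mu)\cdot(1_x\circ c_{b,b}\circ1_b)\cdot(\rho\circ\Delta)=\rho\cdot\lhd$ as 2-cells $x\circ b\Rightarrow x\circ b$. *)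

theory Defs
  imports Main
begin

text \<open>Strict 2-categories, given by sets of objects, 1-cells and 2-cells with
source/target maps and composition operations.
  cmp1 K g f  is the 1-cell  g o f  (first f, then g);
  vcmp K b a  is the vertical composite  b . a  (first a);
  hcmp K b a  is the horizontal composite  b o a;
  idc K f     is the identity 2-cell on f;  idn1 K A the identity 1-cell on A.\<close>

record ('o, 'a, 'c) twocat =
  ob   :: "'o set"
  ar   :: "'a set"
  src1 :: "'a \<Rightarrow> 'o"
  trg1 :: "'a \<Rightarrow> 'o"
  cl   :: "'c set"
  dom2 :: "'c \<Rightarrow> 'a"
  cod2 :: "'c \<Rightarrow> 'a"
  cmp1 :: "'a \<Rightarrow> 'a \<Rightarrow> 'a"
  idn1 :: "'o \<Rightarrow> 'a"
  vcmp :: "'c \<Rightarrow> 'c \<Rightarrow> 'c"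
  hcmp :: "'c \<Rightarrow> 'c \<Rightarrow> 'c"
  idc  :: "'a \<Rightarrow> 'c"

definition arr1 :: "('o,'a,'c,'x) twocat_scheme \<Rightarrow> 'a \<Rightarrow> 'o \<Rightarrow> 'o \<Rightarrow> bool" where
  "arr1 K f A B \<longleftrightarrow> f \<in> ar K \<and> src1 K f = A \<and> trg1 K f = B \<and> A \<in> ob K \<and> B \<in> ob K"

definition cell :: "('o,'a,'c,'x) twocat_scheme \<Rightarrow> 'c \<Rightarrow> 'a \<Rightarrow> 'a \<Rightarrow> bool" where
  "cell K \<alpha> f g \<longleftrightarrow> \<alpha> \<in> cl K \<and> dom2 K \<alpha> = f \<and> cod2 K \<alpha> = g"

definition two_category :: "('o,'a,'c,'x) twocat_scheme \<Rightarrow> bool" where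
  "two_category K \<longleftrightarrow>
    (\<forall>f\<in>ar K. src1 K f \<in> ob K \<and> trg1 K f \<in> ob K) \<and>
    (\<forall>A\<in>ob K. arr1 K (idn1 K A) A A) \<and>
    (\<forall>f g A B C. arr1 K f A B \<longrightarrow> arr1 K g B C \<longrightarrow> arr1 K (cmp1 K g f) A C) \<and>
    (\<forall>f g h A B C D. arr1 K f A B \<longrightarrow> arr1 K g B C \<longrightarrow> arr1 K h C D \<longrightarrow>
        cmp1 K h (cmp1 K g f) = cmp1 K (cmp1 K h g) f) \<and>
    (\<forall>f A B. arr1 K f A B \<longrightarrow> cmp1 K f (idn1 K A) = f \<and> cmp1 K (idn1 K B) f = f) \<and>
    (\<forall>\<alpha>\<in>cl K. \<exists>A B. arr1 K (dom2 K \<alpha>) A B \<and> arr1 K (cod2 K \<alpha>) A B) \<and>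
    (\<forall>f\<in>ar K. cell K (idc K f) f f) \<and>
    (\<forall>\<alpha> \<beta> f g h. cell K \<alpha> f g \<longrightarrow> cell K \<beta> g h \<longrightarrow> cell K (vcmp K \<beta> \<alpha>) f h) \<and>
    (\<forall>\<alpha> \<beta> \<gamma> f g h k. cell K \<alpha> f g \<longrightarrow> cell K \<beta> g h \<longrightarrow> cell K \<gamma> h k \<longrightarrow>
        vcmp K \<gamma> (vcmp K \<beta> \<alpha>) = vcmp K (vcmp K \<gamma> \<beta>) \<alpha>) \<and>
    (\<forall>\<alpha> f g. cell K \<alpha> f g \<longrightarrow> vcmp K (idc K g) \<alpha> = \<alpha> \<and> vcmp K \<alpha> (idc K f) = \<alpha>) \<and>
    (\<forall>\<alpha> \<beta> f f' g g' A B C. cell K \<alpha> f f' \<longrightarrow> cell K \<beta> g g' \<longrightarrow> arr1 K f A B \<longrightarrow> arr1 K g B C \<longrightarrow>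
        cell K (hcmp K \<beta> \<alpha>) (cmp1 K g f) (cmp1 K g' f')) \<and>
    (\<forall>\<alpha> \<beta> \<gamma> f f' g g' h h' A B C D. cell K \<alpha> f f' \<longrightarrow> cell K \<beta> g g' \<longrightarrow> cell K \<gamma> h h' \<longrightarrow>
        arr1 K f A B \<longrightarrow> arr1 K g B C \<longrightarrow> arr1 K h C D \<longrightarrow>
        hcmp K \<gamma> (hcmp K \<beta> \<alpha>) = hcmp K (hcmp K \<gamma> \<beta>) \<alpha>) \<and>
    (\<forall>\<alpha> f f' A B. cell K \<alpha> f f' \<longrightarrow> arr1 K f A B \<longrightarrow>
        hcmp K (idc K (idn1 K B)) \<alpha> = \<alpha> \<and> hcmp K \<alpha> (idc K (idn1 K A)) = \<alpha>) \<and>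
    (\<forall>f g A B C. arr1 K f A B \<longrightarrow> arr1 K g B C \<longrightarrow>
        hcmp K (idc K g) (idc K f) = idc K (cmp1 K g f)) \<and>
    (\<forall>\<alpha> \<alpha>' \<beta> \<beta>' f f' f'' g g' g'' A B C.
        cell K \<alpha> f f' \<longrightarrow> cell K \<alpha>' f' f'' \<longrightarrow> cell K \<beta> g g' \<longrightarrow> cell K \<beta>' g' g'' \<longrightarrow>
        arr1 K f A B \<longrightarrow> arr1 K g B C \<longrightarrow>
        hcmp K (vcmp K \<beta>' \<beta>) (vcmp K \<alpha>' \<alpha>) = vcmp K (hcmp K \<beta>' \<alpha>') (hcmp K \<beta> \<alpha>))"

definition yb_operator :: "('o,'a,'c,'x) twocat_scheme \<Rightarrow> ('a \<Rightarrow> 'a \<Rightarrow> 'c) \<Rightarrow> bool" where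
  "yb_operator K c \<longleftrightarrow>
    (\<forall>f g A. arr1 K f A A \<longrightarrow> arr1 K g A A \<longrightarrow> cell K (c g f) (cmp1 K g f) (cmp1 K f g)) \<and>
    (\<forall>f f' g g' \<alpha> \<beta> A. arr1 K f A A \<longrightarrow> arr1 K g A A \<longrightarrow> cell K \<alpha> g g' \<longrightarrow> cell K \<beta> f f' \<longrightarrow>
        vcmp K (c g' f') (hcmp K \<alpha> \<beta>) = vcmp K (hcmp K \<beta> \<alpha>) (c g f)) \<and>
    (\<forall>f g h A. arr1 K f A A \<longrightarrow> arr1 K g A A \<longrightarrow> arr1 K h A A \<longrightarrow>
        vcmp K (hcmp K (c g f) (idc K h)) (vcmp K (hcmp K (idc K g) (c h f)) (hcmp K (c h g) (idc K f)))
      = vcmp K (hcmp K (idc K f) (c h g)) (vcmp K (hcmp K (c h f) (idc K g)) (hcmp K (idc K h) (c g f)))) \<and>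
    (\<forall>f A. arr1 K f A A \<longrightarrow> c (idn1 K A) f = idc K f \<and> c f (idn1 K A) = idc K f)"

definition c_bimonad :: "('o,'a,'c,'x) twocat_scheme \<Rightarrow> ('a \<Rightarrow> 'a \<Rightarrow> 'c) \<Rightarrow> 'o \<Rightarrow> 'a \<Rightarrow>
    'c \<Rightarrow> 'c \<Rightarrow> 'c \<Rightarrow> 'c \<Rightarrow> bool" where
  "c_bimonad K c A b \<mu> \<eta> \<Delta> \<epsilon> \<longleftrightarrow>
    arr1 K b A A \<and>
    cell K \<mu> (cmp1 K b b) b \<and> cell K \<eta> (idn1 K A) b \<and>
    cell K \<Delta> b (cmp1 K b b) \<and> cell K \<epsilon> b (idn1 K A) \<and>
    \<comment> \<open>monad\<close>
    vcmp K \<mu> (hcmp K \<mu> (idc K b)) = vcmp K \<mu> (hcmp K (idc K b) \<mu>) \<and>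
    vcmp K \<mu> (hcmp K \<eta> (idc K b)) = idc K b \<and>
    vcmp K \<mu> (hcmp K (idc K b) \<eta>) = idc K b \<and>
    \<comment> \<open>comonad\<close>
    vcmp K (hcmp K \<Delta> (idc K b)) \<Delta> = vcmp K (hcmp K (idc K b) \<Delta>) \<Delta> \<and>
    vcmp K (hcmp K \<epsilon> (idc K b)) \<Delta> = idc K b \<and>
    vcmp K (hcmp K (idc K b) \<epsilon>) \<Delta> = idc K b \<and>
    \<comment> \<open>c b b is a left distributive law for the monad\<close>
    vcmp K (c b b) (hcmp K (idc K b) \<mu>)
      = vcmp K (hcmp K \<mu> (idc K b)) (vcmp K (hcmp K (idc K b) (c b b)) (hcmp K (c b b) (idc K b))) \<and>
    vcmp K (c b b) (hcmp K (idc K b) \<eta>) = hcmp K \<eta> (idc K b) \<and>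
    \<comment> \<open>c b b is a right distributive law for the monad\<close>
    vcmp K (c b b) (hcmp K \<mu> (idc K b))
      = vcmp K (hcmp K (idc K b) \<mu>) (vcmp K (hcmp K (c b b) (idc K b)) (hcmp K (idc K b) (c b b))) \<and>
    vcmp K (c b b) (hcmp K \<eta> (idc K b)) = hcmp K (idc K b) \<eta> \<and>
    \<comment> \<open>c b b is a left distributive law for the comonad\<close>
    vcmp K (hcmp K \<Delta> (idc K b)) (c b b)
      = vcmp K (hcmp K (idc K b) (c b b)) (vcmp K (hcmp K (c b b) (idc K b)) (hcmp K (idc K b) \<Delta>)) \<and>
    vcmp K (hcmp K \<epsilon> (idc K b)) (c b b) = hcmp K (idc K b) \<epsilon> \<and>
    \<comment> \<open>c b b is a right distributive law for the comonad\<close>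
    vcmp K (hcmp K (idc K b) \<Delta>) (c b b)
      = vcmp K (hcmp K (c b b) (idc K b)) (vcmp K (hcmp K (idc K b) (c b b)) (hcmp K \<Delta> (idc K b))) \<and>
    vcmp K (hcmp K (idc K b) \<epsilon>) (c b b) = hcmp K \<epsilon> (idc K b) \<and>
    \<comment> \<open>bimonad compatibility\<close>
    vcmp K (hcmp K \<mu> \<mu>) (vcmp K (hcmp K (idc K b) (hcmp K (c b b) (idc K b))) (hcmp K \<Delta> \<Delta>))
      = vcmp K \<Delta> \<mu> \<and>
    hcmp K \<epsilon> \<epsilon> = vcmp K \<epsilon> \<mu> \<and>
    hcmp K \<eta> \<eta> = vcmp K \<Delta> \<eta> \<and>
    vcmp K \<epsilon> \<eta> = idc K (idn1 K A)"

definition right_rel_bimonad_module :: "('o,'a,'c,'x) twocat_scheme \<Rightarrow> ('a \<Rightarrow> 'a \<Rightarrow> 'c) \<Rightarrow>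
    'o \<Rightarrow> 'o \<Rightarrow> 'a \<Rightarrow> 'c \<Rightarrow> 'c \<Rightarrow> 'c \<Rightarrow> 'c \<Rightarrow> 'a \<Rightarrow> 'c \<Rightarrow> 'c \<Rightarrow> bool" where
  "right_rel_bimonad_module K c A B b \<mu> \<eta> \<Delta> \<epsilon> x act coact \<longleftrightarrow>
    c_bimonad K c A b \<mu> \<eta> \<Delta> \<epsilon> \<and>
    arr1 K x A B \<and>
    cell K act (cmp1 K x b) x \<and> cell K coact x (cmp1 K x b) \<and>
    vcmp K act (hcmp K act (idc K b)) = vcmp K act (hcmp K (idc K x) \<mu>) \<and>
    vcmp K act (hcmp K (idc K x) \<eta>) = idc K x \<and>
    vcmp K (hcmp K coact (idc K b)) coact = vcmp K (hcmp K (idc K x) \<Delta>) coact \<and>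
    vcmp K (hcmp K (idc K x) \<epsilon>) coact = idc K x \<and>
    vcmp K (hcmp K act \<mu>) (vcmp K (hcmp K (idc K x) (hcmp K (c b b) (idc K b))) (hcmp K coact \<Delta>))
      = vcmp K coact act"

text \<open>F0, F1, F2 act on objects, 1-cells, 2-cells;
  L2 g f = F^2_{g,f} : F g o F f \<Rightarrow> F (g f),  L0 A = F^0_A : id \<Rightarrow> F(id_A),
  C2 g f = F_{2;g,f} : F (g f) \<Rightarrow> F g o F f,  C0 A = F_{0;A} : F(id_A) \<Rightarrow> id,
  \<nu> f g : F f o F g \<Rightarrow> F g o F f for endo-1-cells f, g.\<close>

definition bilax_functor ::
  "('o,'a,'c,'x) twocat_scheme \<Rightarrow> ('a \<Rightarrow> 'a \<Rightarrow> 'c) \<Rightarrow>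
   ('p,'b,'d,'y) twocat_scheme \<Rightarrow> ('b \<Rightarrow> 'b \<Rightarrow> 'd) \<Rightarrow>
   ('o \<Rightarrow> 'p) \<Rightarrow> ('a \<Rightarrow> 'b) \<Rightarrow> ('c \<Rightarrow> 'd) \<Rightarrow>
   ('a \<Rightarrow> 'a \<Rightarrow> 'd) \<Rightarrow> ('o \<Rightarrow> 'd) \<Rightarrow> ('a \<Rightarrow> 'a \<Rightarrow> 'd) \<Rightarrow> ('o \<Rightarrow> 'd) \<Rightarrow>
   ('a \<Rightarrow> 'a \<Rightarrow> 'd) \<Rightarrow> bool" where
  "bilax_functor K c K' c' F0 F1 F2 L2 L0 C2 C0 \<nu> \<longleftrightarrow>
    \<comment> \<open>action on objects, 1-cells, 2-cells; F2 is functorial on hom-categories\<close>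
    (\<forall>A\<in>ob K. F0 A \<in> ob K') \<and>
    (\<forall>f A B. arr1 K f A B \<longrightarrow> arr1 K' (F1 f) (F0 A) (F0 B)) \<and>
    (\<forall>\<alpha> f g. cell K \<alpha> f g \<longrightarrow> cell K' (F2 \<alpha>) (F1 f) (F1 g)) \<and>
    (\<forall>f\<in>ar K. F2 (idc K f) = idc K' (F1 f)) \<and>
    (\<forall>\<alpha> \<beta> f g h. cell K \<alpha> f g \<longrightarrow> cell K \<beta> g h \<longrightarrow> F2 (vcmp K \<beta> \<alpha>) = vcmp K' (F2 \<beta>) (F2 \<alpha>)) \<and>
    \<comment> \<open>lax structure\<close>
    (\<forall>f g A B C. arr1 K f A B \<longrightarrow> arr1 K g B C \<longrightarrow>
        cell K' (L2 g f) (cmp1 K' (F1 g) (F1 f)) (F1 (cmp1 K g f))) \<and>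
    (\<forall>A\<in>ob K. cell K' (L0 A) (idn1 K' (F0 A)) (F1 (idn1 K A))) \<and>
    (\<forall>\<alpha> \<beta> f f' g g' A B C. cell K \<alpha> f f' \<longrightarrow> cell K \<beta> g g' \<longrightarrow> arr1 K f A B \<longrightarrow> arr1 K g B C \<longrightarrow>
        vcmp K' (F2 (hcmp K \<beta> \<alpha>)) (L2 g f) = vcmp K' (L2 g' f') (hcmp K' (F2 \<beta>) (F2 \<alpha>))) \<and>
    (\<forall>f g h A B C D. arr1 K f A B \<longrightarrow> arr1 K g B C \<longrightarrow> arr1 K h C D \<longrightarrow>
        vcmp K' (L2 (cmp1 K h g) f) (hcmp K' (L2 h g) (idc K' (F1 f)))
      = vcmp K' (L2 h (cmp1 K g f)) (hcmp K' (idc K' (F1 h)) (L2 g f))) \<and>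
    (\<forall>f A B. arr1 K f A B \<longrightarrow>
        vcmp K' (L2 f (idn1 K A)) (hcmp K' (idc K' (F1 f)) (L0 A)) = idc K' (F1 f) \<and>
        vcmp K' (L2 (idn1 K B) f) (hcmp K' (L0 B) (idc K' (F1 f))) = idc K' (F1 f)) \<and>
    \<comment> \<open>colax structure\<close>
    (\<forall>f g A B C. arr1 K f A B \<longrightarrow> arr1 K g B C \<longrightarrow>
        cell K' (C2 g f) (F1 (cmp1 K g f)) (cmp1 K' (F1 g) (F1 f))) \<and>
    (\<forall>A\<in>ob K. cell K' (C0 A) (F1 (idn1 K A)) (idn1 K' (F0 A))) \<and>
    (\<forall>\<alpha> \<beta> f f' g g' A B C. cell K \<alpha> f f' \<longrightarrow> cell K \<beta> g g' \<longrightarrow> arr1 K f A B \<longrightarrow> arr1 K g B C \<longrightarrow>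
        vcmp K' (hcmp K' (F2 \<beta>) (F2 \<alpha>)) (C2 g f) = vcmp K' (C2 g' f') (F2 (hcmp K \<beta> \<alpha>))) \<and>
    (\<forall>f g h A B C D. arr1 K f A B \<longrightarrow> arr1 K g B C \<longrightarrow> arr1 K h C D \<longrightarrow>
        vcmp K' (hcmp K' (C2 h g) (idc K' (F1 f))) (C2 (cmp1 K h g) f)
      = vcmp K' (hcmp K' (idc K' (F1 h)) (C2 g f)) (C2 h (cmp1 K g f))) \<and>
    (\<forall>f A B. arr1 K f A B \<longrightarrow>
        vcmp K' (hcmp K' (idc K' (F1 f)) (C0 A)) (C2 f (idn1 K A)) = idc K' (F1 f) \<and>
        vcmp K' (hcmp K' (C0 B) (idc K' (F1 f))) (C2 (idn1 K B) f) = idc K' (F1 f)) \<and>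
    \<comment> \<open>\<nu> is a (natural) Yang--Baxter operator\<close>
    (\<forall>f g A. arr1 K f A A \<longrightarrow> arr1 K g A A \<longrightarrow>
        cell K' (\<nu> f g) (cmp1 K' (F1 f) (F1 g)) (cmp1 K' (F1 g) (F1 f))) \<and>
    (\<forall>f f' g g' \<alpha> \<beta> A. arr1 K f A A \<longrightarrow> arr1 K g A A \<longrightarrow> cell K \<alpha> f f' \<longrightarrow> cell K \<beta> g g' \<longrightarrow>
        vcmp K' (\<nu> f' g') (hcmp K' (F2 \<alpha>) (F2 \<beta>)) = vcmp K' (hcmp K' (F2 \<beta>) (F2 \<alpha>)) (\<nu> f g)) \<and>
    (\<forall>f g h A. arr1 K f A A \<longrightarrow> arr1 K g A A \<longrightarrow> arr1 K h A A \<longrightarrow>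
        vcmp K' (hcmp K' (\<nu> g f) (idc K' (F1 h)))
          (vcmp K' (hcmp K' (idc K' (F1 g)) (\<nu> h f)) (hcmp K' (\<nu> h g) (idc K' (F1 f))))
      = vcmp K' (hcmp K' (idc K' (F1 f)) (\<nu> h g))
          (vcmp K' (hcmp K' (\<nu> h f) (idc K' (F1 g))) (hcmp K' (idc K' (F1 h)) (\<nu> g f)))) \<and>
    \<comment> \<open>\<nu> is a left and right distributive law for the lax structure\<close>
    (\<forall>f g h A. arr1 K f A A \<longrightarrow> arr1 K g A A \<longrightarrow> arr1 K h A A \<longrightarrow>
        vcmp K' (\<nu> f (cmp1 K g h)) (hcmp K' (idc K' (F1 f)) (L2 g h))
      = vcmp K' (hcmp K' (L2 g h) (idc K' (F1 f)))
          (vcmp K' (hcmp K' (idc K' (F1 g)) (\<nu> f h)) (hcmp K' (\<nu> f g) (idc K' (F1 h))))) \<and>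
    (\<forall>f g h A. arr1 K f A A \<longrightarrow> arr1 K g A A \<longrightarrow> arr1 K h A A \<longrightarrow>
        vcmp K' (\<nu> (cmp1 K g h) f) (hcmp K' (L2 g h) (idc K' (F1 f)))
      = vcmp K' (hcmp K' (idc K' (F1 f)) (L2 g h))
          (vcmp K' (hcmp K' (\<nu> g f) (idc K' (F1 h))) (hcmp K' (idc K' (F1 g)) (\<nu> h f)))) \<and>
    (\<forall>f A. arr1 K f A A \<longrightarrow>
        vcmp K' (\<nu> f (idn1 K A)) (hcmp K' (idc K' (F1 f)) (L0 A)) = hcmp K' (L0 A) (idc K' (F1 f)) \<and>
        vcmp K' (\<nu> (idn1 K A) f) (hcmp K' (L0 A) (idc K' (F1 f))) = hcmp K' (idc K' (F1 f)) (L0 A)) \<and>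
    \<comment> \<open>\<nu> is a left and right distributive law for the colax structure\<close>
    (\<forall>f g h A. arr1 K f A A \<longrightarrow> arr1 K g A A \<longrightarrow> arr1 K h A A \<longrightarrow>
        vcmp K' (hcmp K' (C2 g h) (idc K' (F1 f))) (\<nu> f (cmp1 K g h))
      = vcmp K' (hcmp K' (idc K' (F1 g)) (\<nu> f h))
          (vcmp K' (hcmp K' (\<nu> f g) (idc K' (F1 h))) (hcmp K' (idc K' (F1 f)) (C2 g h)))) \<and>
    (\<forall>f g h A. arr1 K f A A \<longrightarrow> arr1 K g A A \<longrightarrow> arr1 K h A A \<longrightarrow>
        vcmp K' (hcmp K' (idc K' (F1 f)) (C2 g h)) (\<nu> (cmp1 K g h) f)
      = vcmp K' (hcmp K' (\<nu> g f) (idc K' (F1 h)))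
          (vcmp K' (hcmp K' (idc K' (F1 g)) (\<nu> h f)) (hcmp K' (C2 g h) (idc K' (F1 f))))) \<and>
    (\<forall>f A. arr1 K f A A \<longrightarrow>
        vcmp K' (hcmp K' (C0 A) (idc K' (F1 f))) (\<nu> f (idn1 K A)) = hcmp K' (idc K' (F1 f)) (C0 A) \<and>
        vcmp K' (hcmp K' (idc K' (F1 f)) (C0 A)) (\<nu> (idn1 K A) f) = hcmp K' (C0 A) (idc K' (F1 f))) \<and>
    \<comment> \<open>bilaxity conditions\<close>
    (\<forall>k h f g A B C. arr1 K k A B \<longrightarrow> arr1 K h B B \<longrightarrow> arr1 K f B B \<longrightarrow> arr1 K g B C \<longrightarrow>
        vcmp K' (hcmp K' (L2 g h) (L2 f k))
          (vcmp K' (hcmp K' (idc K' (F1 g)) (hcmp K' (\<nu> f h) (idc K' (F1 k))))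
                   (hcmp K' (C2 g f) (C2 h k)))
      = vcmp K' (C2 (cmp1 K g h) (cmp1 K f k))
          (vcmp K' (F2 (hcmp K (idc K g) (hcmp K (c f h) (idc K k))))
                   (L2 (cmp1 K g f) (cmp1 K h k)))) \<and>
    (\<forall>A\<in>ob K. hcmp K' (L0 A) (L0 A) = vcmp K' (C2 (idn1 K A) (idn1 K A)) (L0 A)) \<and>
    (\<forall>A\<in>ob K. hcmp K' (C0 A) (C0 A) = vcmp K' (C0 A) (L2 (idn1 K A) (idn1 K A))) \<and>
    (\<forall>A\<in>ob K. vcmp K' (C0 A) (L0 A) = idc K' (idn1 K' (F0 A)))"

definition yb_compatible ::
  "('o,'a,'c,'x) twocat_scheme \<Rightarrow> ('b \<Rightarrow> 'b \<Rightarrow> 'd) \<Rightarrow> ('a \<Rightarrow> 'b) \<Rightarrow> ('a \<Rightarrow> 'a \<Rightarrow> 'd) \<Rightarrow> bool" where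
  "yb_compatible K c' F1 \<nu> \<longleftrightarrow>
    (\<forall>f g A. arr1 K f A A \<longrightarrow> arr1 K g A A \<longrightarrow> \<nu> f g = c' (F1 f) (F1 g))"

end

theory Submission
  imports Defs
begin

text \<open>The monad and module halves of the structure are carried over by the lax structure of
  \<open>\<F>\<close> alone, the comonad and comodule halves by the colax structure alone, and \<open>c' = \<nu>\<close>
  distributes over the images because \<open>\<nu>\<close> is natural and distributes over \<open>\<F>\<^sup>2\<close>,
  \<open>\<F>\<^sup>0\<close>, \<open>\<F>\<^sub>2\<close>, \<open>\<F>\<^sub>0\<close>. The bilaxity conditions are needed only for the laws
  mixing the two halves. Those involving units and counits follow from the conditions on
  \<open>\<F>\<^sup>0\<close> and \<open>\<F>\<^sub>0\<close>. The other two, for \<open>\<mu>\<close> with \<open>\<Delta>\<close> and for \<open>\<lhd>\<close> with \<open>\<rho>\<close>,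
  share the shape \<open>(\<alpha>' \<circ> \<beta>') \<cdot> (1 \<circ> \<nu> \<circ> 1) \<cdot> (\<gamma>' \<circ> \<delta>')\<close> with \<open>\<alpha>' = \<F>\<alpha> \<cdot> \<F>\<^sup>2\<close>
  and \<open>\<gamma>' = \<F>\<^sub>2 \<cdot> \<F>\<gamma>\<close>. Interchange exposes \<open>(\<F>\<^sup>2 \<circ> \<F>\<^sup>2) \<cdot> (1 \<circ> \<nu> \<circ> 1) \<cdot> (\<F>\<^sub>2 \<circ> \<F>\<^sub>2)\<close>,
  bilaxity replaces it by \<open>\<F>\<^sub>2 \<cdot> \<F>(1 \<circ> c \<circ> 1) \<cdot> \<F>\<^sup>2\<close>, and naturality of \<open>\<F>\<^sup>2\<close> and
  \<open>\<F>\<^sub>2\<close> gathers everything under \<open>\<F>\<close>, where the corresponding law in \<open>\<K>\<close> applies.\<close>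

section \<open>Monads, comonads and modules in a 2-category\<close>

definition monad :: "('o,'a,'c,'x) twocat_scheme \<Rightarrow> 'o \<Rightarrow> 'a \<Rightarrow> 'c \<Rightarrow> 'c \<Rightarrow> bool" where
  "monad K A b \<mu> \<eta> \<longleftrightarrow>
    arr1 K b A A \<and> cell K \<mu> (cmp1 K b b) b \<and> cell K \<eta> (idn1 K A) b \<and>
    vcmp K \<mu> (hcmp K \<mu> (idc K b)) = vcmp K \<mu> (hcmp K (idc K b) \<mu>) \<and>
    vcmp K \<mu> (hcmp K \<eta> (idc K b)) = idc K b \<and>
    vcmp K \<mu> (hcmp K (idc K b) \<eta>) = idc K b"

definition comonad :: "('o,'a,'c,'x) twocat_scheme \<Rightarrow> 'o \<Rightarrow> 'a \<Rightarrow> 'c \<Rightarrow> 'c \<Rightarrow> bool" where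
  "comonad K A b \<Delta> \<epsilon> \<longleftrightarrow>
    arr1 K b A A \<and> cell K \<Delta> b (cmp1 K b b) \<and> cell K \<epsilon> b (idn1 K A) \<and>
    vcmp K (hcmp K \<Delta> (idc K b)) \<Delta> = vcmp K (hcmp K (idc K b) \<Delta>) \<Delta> \<and>
    vcmp K (hcmp K \<epsilon> (idc K b)) \<Delta> = idc K b \<and>
    vcmp K (hcmp K (idc K b) \<epsilon>) \<Delta> = idc K b"

definition monad_distributive_law :: "('o,'a,'c,'x) twocat_scheme \<Rightarrow> 'a \<Rightarrow> 'c \<Rightarrow> 'c \<Rightarrow> 'c \<Rightarrow> bool" where
  "monad_distributive_law K b \<mu> \<eta> d \<longleftrightarrow>
    vcmp K d (hcmp K (idc K b) \<mu>)
      = vcmp K (hcmp K \<mu> (idc K b)) (vcmp K (hcmp K (idc K b) d) (hcmp K d (idc K b))) \<and>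
    vcmp K d (hcmp K (idc K b) \<eta>) = hcmp K \<eta> (idc K b) \<and>
    vcmp K d (hcmp K \<mu> (idc K b))
      = vcmp K (hcmp K (idc K b) \<mu>) (vcmp K (hcmp K d (idc K b)) (hcmp K (idc K b) d)) \<and>
    vcmp K d (hcmp K \<eta> (idc K b)) = hcmp K (idc K b) \<eta>"

definition comonad_distributive_law :: "('o,'a,'c,'x) twocat_scheme \<Rightarrow> 'a \<Rightarrow> 'c \<Rightarrow> 'c \<Rightarrow> 'c \<Rightarrow> bool" where
  "comonad_distributive_law K b \<Delta> \<epsilon> d \<longleftrightarrow>
    vcmp K (hcmp K \<Delta> (idc K b)) d
      = vcmp K (hcmp K (idc K b) d) (vcmp K (hcmp K d (idc K b)) (hcmp K (idc K b) \<Delta>)) \<and>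
    vcmp K (hcmp K \<epsilon> (idc K b)) d = hcmp K (idc K b) \<epsilon> \<and>
    vcmp K (hcmp K (idc K b) \<Delta>) d
      = vcmp K (hcmp K d (idc K b)) (vcmp K (hcmp K (idc K b) d) (hcmp K \<Delta> (idc K b))) \<and>
    vcmp K (hcmp K (idc K b) \<epsilon>) d = hcmp K \<epsilon> (idc K b)"

definition bimonad_axioms ::
    "('o,'a,'c,'x) twocat_scheme \<Rightarrow> 'o \<Rightarrow> 'a \<Rightarrow> 'c \<Rightarrow> 'c \<Rightarrow> 'c \<Rightarrow> 'c \<Rightarrow> 'c \<Rightarrow> bool" where
  "bimonad_axioms K A b \<mu> \<eta> \<Delta> \<epsilon> d \<longleftrightarrow>
    vcmp K (hcmp K \<mu> \<mu>) (vcmp K (hcmp K (idc K b) (hcmp K d (idc K b))) (hcmp K \<Delta> \<Delta>)) = vcmp K \<Delta> \<mu> \<and>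
    hcmp K \<epsilon> \<epsilon> = vcmp K \<epsilon> \<mu> \<and>
    hcmp K \<eta> \<eta> = vcmp K \<Delta> \<eta> \<and>
    vcmp K \<epsilon> \<eta> = idc K (idn1 K A)"

definition right_module :: "('o,'a,'c,'x) twocat_scheme \<Rightarrow> 'a \<Rightarrow> 'c \<Rightarrow> 'c \<Rightarrow> 'a \<Rightarrow> 'c \<Rightarrow> bool" where
  "right_module K b \<mu> \<eta> x act \<longleftrightarrow>
    cell K act (cmp1 K x b) x \<and>
    vcmp K act (hcmp K act (idc K b)) = vcmp K act (hcmp K (idc K x) \<mu>) \<and>
    vcmp K act (hcmp K (idc K x) \<eta>) = idc K x"

definition right_comodule :: "('o,'a,'c,'x) twocat_scheme \<Rightarrow> 'a \<Rightarrow> 'c \<Rightarrow> 'c \<Rightarrow> 'a \<Rightarrow> 'c \<Rightarrow> bool" where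
  "right_comodule K b \<Delta> \<epsilon> x coact \<longleftrightarrow>
    cell K coact x (cmp1 K x b) \<and>
    vcmp K (hcmp K coact (idc K b)) coact = vcmp K (hcmp K (idc K x) \<Delta>) coact \<and>
    vcmp K (hcmp K (idc K x) \<epsilon>) coact = idc K x"

definition action_coaction_compatible ::
    "('o,'a,'c,'x) twocat_scheme \<Rightarrow> 'a \<Rightarrow> 'c \<Rightarrow> 'c \<Rightarrow> 'c \<Rightarrow> 'a \<Rightarrow> 'c \<Rightarrow> 'c \<Rightarrow> bool" where
  "action_coaction_compatible K b \<mu> \<Delta> d x act coact \<longleftrightarrow>
    vcmp K (hcmp K act \<mu>) (vcmp K (hcmp K (idc K x) (hcmp K d (idc K b))) (hcmp K coact \<Delta>))
      = vcmp K coact act"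

lemma c_bimonad_iff:
  "c_bimonad K c A b \<mu> \<eta> \<Delta> \<epsilon> \<longleftrightarrow>
    monad K A b \<mu> \<eta> \<and> comonad K A b \<Delta> \<epsilon> \<and>
    monad_distributive_law K b \<mu> \<eta> (c b b) \<and> comonad_distributive_law K b \<Delta> \<epsilon> (c b b) \<and>
    bimonad_axioms K A b \<mu> \<eta> \<Delta> \<epsilon> (c b b)"
  unfolding c_bimonad_def monad_def comonad_def monad_distributive_law_def
    comonad_distributive_law_def bimonad_axioms_def
  by blast

lemma right_rel_bimonad_module_iff:
  "right_rel_bimonad_module K c A B b \<mu> \<eta> \<Delta> \<epsilon> x act coact \<longleftrightarrow>
    c_bimonad K c A b \<mu> \<eta> \<Delta> \<epsilon> \<and> arr1 K x A B \<and>
    right_module K b \<mu> \<eta> x act \<and> right_comodule K b \<Delta> \<epsilon> x coact \<and>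
    action_coaction_compatible K b \<mu> \<Delta> (c b b) x act coact"
  unfolding right_rel_bimonad_module_def right_module_def right_comodule_def
    action_coaction_compatible_def
  by blast

section \<open>Strict 2-categories\<close>

locale two_cat =
  fixes K :: "('o,'a,'c,'x) twocat_scheme"
  assumes two_category: "two_category K"
begin

lemma ar_ob: "f \<in> ar K \<Longrightarrow> src1 K f \<in> ob K \<and> trg1 K f \<in> ob K"
  using two_category unfolding two_category_def by (elim conjE) (simp only:)

lemma arr1_idn1: "A \<in> ob K \<Longrightarrow> arr1 K (idn1 K A) A A"
  using two_category unfolding two_category_def by (elim conjE) (simp only:)

lemma arr1_cmp1: "arr1 K f A B \<Longrightarrow> arr1 K g B C \<Longrightarrow> arr1 K (cmp1 K g f) A C"
  using two_category unfolding two_category_def by (elim conjE) (simp only:)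

lemma cmp1_assoc_arr1:
  "arr1 K f A B \<Longrightarrow> arr1 K g B C \<Longrightarrow> arr1 K h C D \<Longrightarrow> cmp1 K h (cmp1 K g f) = cmp1 K (cmp1 K h g) f"
  using two_category unfolding two_category_def by (elim conjE) (simp only:)

lemma cmp1_idn1_arr1: "arr1 K f A B \<Longrightarrow> cmp1 K f (idn1 K A) = f \<and> cmp1 K (idn1 K B) f = f"
  using two_category unfolding two_category_def by (elim conjE) (simp only:)

lemma cl_parallel: "\<alpha> \<in> cl K \<Longrightarrow> \<exists>A B. arr1 K (dom2 K \<alpha>) A B \<and> arr1 K (cod2 K \<alpha>) A B"
  using two_category unfolding two_category_def by (elim conjE) (simp only:)

lemma cell_idc: "f \<in> ar K \<Longrightarrow> cell K (idc K f) f f"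
  using two_category unfolding two_category_def by (elim conjE) (simp only:)

lemma cell_vcmp: "cell K \<alpha> f g \<Longrightarrow> cell K \<beta> g h \<Longrightarrow> cell K (vcmp K \<beta> \<alpha>) f h"
  using two_category unfolding two_category_def by (elim conjE) (simp only:)

lemma vcmp_assoc_cell: "cell K \<alpha> f g \<Longrightarrow> cell K \<beta> g h \<Longrightarrow> cell K \<gamma> h k \<Longrightarrow>
  vcmp K \<gamma> (vcmp K \<beta> \<alpha>) = vcmp K (vcmp K \<gamma> \<beta>) \<alpha>"
  using two_category unfolding two_category_def by (elim conjE) (simp only:)

lemma vcmp_idc_cell: "cell K \<alpha> f g \<Longrightarrow> vcmp K (idc K g) \<alpha> = \<alpha> \<and> vcmp K \<alpha> (idc K f) = \<alpha>"
  using two_category unfolding two_category_def by (elim conjE) (simp only:)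

lemma cell_hcmp: "cell K \<alpha> f f' \<Longrightarrow> cell K \<beta> g g' \<Longrightarrow> arr1 K f A B \<Longrightarrow> arr1 K g B C \<Longrightarrow>
  cell K (hcmp K \<beta> \<alpha>) (cmp1 K g f) (cmp1 K g' f')"
  using two_category unfolding two_category_def by (elim conjE) (simp only:)

lemma interchange_cell:
  "cell K \<alpha> f f' \<Longrightarrow> cell K \<alpha>' f' f'' \<Longrightarrow> cell K \<beta> g g' \<Longrightarrow> cell K \<beta>' g' g'' \<Longrightarrow>
   arr1 K f A B \<Longrightarrow> arr1 K g B C \<Longrightarrow>
   hcmp K (vcmp K \<beta>' \<beta>) (vcmp K \<alpha>' \<alpha>) = vcmp K (hcmp K \<beta>' \<alpha>') (hcmp K \<beta> \<alpha>)"
  using two_category unfolding two_category_def by (elim conjE) (simp only:)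

lemma src1_in_ob [simp]: "f \<in> ar K \<Longrightarrow> src1 K f \<in> ob K"
  and trg1_in_ob [simp]: "f \<in> ar K \<Longrightarrow> trg1 K f \<in> ob K"
  using ar_ob by blast+

lemma idn1_in_ar [simp]: "A \<in> ob K \<Longrightarrow> idn1 K A \<in> ar K"
  and src1_idn1 [simp]: "A \<in> ob K \<Longrightarrow> src1 K (idn1 K A) = A"
  and trg1_idn1 [simp]: "A \<in> ob K \<Longrightarrow> trg1 K (idn1 K A) = A"
  using arr1_idn1 unfolding arr1_def by blast+

lemma arr1_cmp1_ar: "f \<in> ar K \<Longrightarrow> g \<in> ar K \<Longrightarrow> trg1 K f = src1 K g \<Longrightarrow>
  arr1 K (cmp1 K g f) (src1 K f) (trg1 K g)"
  by (rule arr1_cmp1) (auto simp: arr1_def)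

lemma cmp1_in_ar [simp]: "f \<in> ar K \<Longrightarrow> g \<in> ar K \<Longrightarrow> trg1 K f = src1 K g \<Longrightarrow> cmp1 K g f \<in> ar K"
  and src1_cmp1 [simp]: "f \<in> ar K \<Longrightarrow> g \<in> ar K \<Longrightarrow> trg1 K f = src1 K g \<Longrightarrow> src1 K (cmp1 K g f) = src1 K f"
  and trg1_cmp1 [simp]: "f \<in> ar K \<Longrightarrow> g \<in> ar K \<Longrightarrow> trg1 K f = src1 K g \<Longrightarrow> trg1 K (cmp1 K g f) = trg1 K g"
  using arr1_cmp1_ar unfolding arr1_def by blast+

lemma cmp1_assoc [simp]: "f \<in> ar K \<Longrightarrow> g \<in> ar K \<Longrightarrow> h \<in> ar K \<Longrightarrow>
  trg1 K f = src1 K g \<Longrightarrow> trg1 K g = src1 K h \<Longrightarrow> cmp1 K (cmp1 K h g) f = cmp1 K h (cmp1 K g f)"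
  using cmp1_assoc_arr1[of f "src1 K f" "trg1 K f" g "trg1 K g" h "trg1 K h"] by (simp add: arr1_def)

lemma cmp1_idn1_left [simp]: "f \<in> ar K \<Longrightarrow> B = trg1 K f \<Longrightarrow> cmp1 K (idn1 K B) f = f"
  and cmp1_idn1_right [simp]: "f \<in> ar K \<Longrightarrow> A = src1 K f \<Longrightarrow> cmp1 K f (idn1 K A) = f"
  using cmp1_idn1_arr1[of f "src1 K f" "trg1 K f"] by (simp_all add: arr1_def)

lemma dom2_in_ar [simp]: "\<alpha> \<in> cl K \<Longrightarrow> dom2 K \<alpha> \<in> ar K"
  and cod2_in_ar [simp]: "\<alpha> \<in> cl K \<Longrightarrow> cod2 K \<alpha> \<in> ar K"
  and src1_cod2 [simp]: "\<alpha> \<in> cl K \<Longrightarrow> src1 K (cod2 K \<alpha>) = src1 K (dom2 K \<alpha>)"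
  and trg1_cod2 [simp]: "\<alpha> \<in> cl K \<Longrightarrow> trg1 K (cod2 K \<alpha>) = trg1 K (dom2 K \<alpha>)"
  using cl_parallel unfolding arr1_def by metis+

lemma arr1_cod2: "cell K \<phi> f g \<Longrightarrow> arr1 K f A B \<Longrightarrow> arr1 K g A B"
  and arr1_dom2: "cell K \<phi> f g \<Longrightarrow> arr1 K g A B \<Longrightarrow> arr1 K f A B"
  using cl_parallel[of \<phi>] unfolding cell_def arr1_def by auto

lemma idc_in_cl [simp]: "f \<in> ar K \<Longrightarrow> idc K f \<in> cl K"
  and dom2_idc [simp]: "f \<in> ar K \<Longrightarrow> dom2 K (idc K f) = f"
  and cod2_idc [simp]: "f \<in> ar K \<Longrightarrow> cod2 K (idc K f) = f"
  using cell_idc unfolding cell_def by blast+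

lemma cell_self: "\<alpha> \<in> cl K \<Longrightarrow> cell K \<alpha> (dom2 K \<alpha>) (cod2 K \<alpha>)"
  by (simp add: cell_def)

lemma cell_vcmp_cl: "\<alpha> \<in> cl K \<Longrightarrow> \<beta> \<in> cl K \<Longrightarrow> cod2 K \<alpha> = dom2 K \<beta> \<Longrightarrow>
  cell K (vcmp K \<beta> \<alpha>) (dom2 K \<alpha>) (cod2 K \<beta>)"
  by (rule cell_vcmp) (simp_all add: cell_def)

lemma vcmp_in_cl [simp]: "\<alpha> \<in> cl K \<Longrightarrow> \<beta> \<in> cl K \<Longrightarrow> cod2 K \<alpha> = dom2 K \<beta> \<Longrightarrow> vcmp K \<beta> \<alpha> \<in> cl K"
  and dom2_vcmp [simp]: "\<alpha> \<in> cl K \<Longrightarrow> \<beta> \<in> cl K \<Longrightarrow> cod2 K \<alpha> = dom2 K \<beta> \<Longrightarrow> dom2 K (vcmp K \<beta> \<alpha>) = dom2 K \<alpha>"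
  and cod2_vcmp [simp]: "\<alpha> \<in> cl K \<Longrightarrow> \<beta> \<in> cl K \<Longrightarrow> cod2 K \<alpha> = dom2 K \<beta> \<Longrightarrow> cod2 K (vcmp K \<beta> \<alpha>) = cod2 K \<beta>"
  using cell_vcmp_cl unfolding cell_def by blast+

lemma vcmp_assoc [simp]: "\<alpha> \<in> cl K \<Longrightarrow> \<beta> \<in> cl K \<Longrightarrow> \<gamma> \<in> cl K \<Longrightarrow>
  cod2 K \<alpha> = dom2 K \<beta> \<Longrightarrow> cod2 K \<beta> = dom2 K \<gamma> \<Longrightarrow>
  vcmp K (vcmp K \<gamma> \<beta>) \<alpha> = vcmp K \<gamma> (vcmp K \<beta> \<alpha>)"
  using vcmp_assoc_cell[of \<alpha> "dom2 K \<alpha>" "cod2 K \<alpha>" \<beta> "cod2 K \<beta>" \<gamma> "cod2 K \<gamma>"]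
  by (simp add: cell_def)

lemma vcmp_idc_left [simp]: "\<alpha> \<in> cl K \<Longrightarrow> g = cod2 K \<alpha> \<Longrightarrow> vcmp K (idc K g) \<alpha> = \<alpha>"
  and vcmp_idc_right [simp]: "\<alpha> \<in> cl K \<Longrightarrow> f = dom2 K \<alpha> \<Longrightarrow> vcmp K \<alpha> (idc K f) = \<alpha>"
  using vcmp_idc_cell[OF cell_self] by blast+

lemma cell_hcmp_cl: "\<alpha> \<in> cl K \<Longrightarrow> \<beta> \<in> cl K \<Longrightarrow> trg1 K (dom2 K \<alpha>) = src1 K (dom2 K \<beta>) \<Longrightarrow>
  cell K (hcmp K \<beta> \<alpha>) (cmp1 K (dom2 K \<beta>) (dom2 K \<alpha>)) (cmp1 K (cod2 K \<beta>) (cod2 K \<alpha>))"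
  by (rule cell_hcmp[OF cell_self cell_self]) (auto simp: arr1_def)

lemma hcmp_in_cl [simp]: "\<alpha> \<in> cl K \<Longrightarrow> \<beta> \<in> cl K \<Longrightarrow> trg1 K (dom2 K \<alpha>) = src1 K (dom2 K \<beta>) \<Longrightarrow>
    hcmp K \<beta> \<alpha> \<in> cl K"
  and dom2_hcmp [simp]: "\<alpha> \<in> cl K \<Longrightarrow> \<beta> \<in> cl K \<Longrightarrow> trg1 K (dom2 K \<alpha>) = src1 K (dom2 K \<beta>) \<Longrightarrow>
    dom2 K (hcmp K \<beta> \<alpha>) = cmp1 K (dom2 K \<beta>) (dom2 K \<alpha>)"
  and cod2_hcmp [simp]: "\<alpha> \<in> cl K \<Longrightarrow> \<beta> \<in> cl K \<Longrightarrow> trg1 K (dom2 K \<alpha>) = src1 K (dom2 K \<beta>) \<Longrightarrow>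
    cod2 K (hcmp K \<beta> \<alpha>) = cmp1 K (cod2 K \<beta>) (cod2 K \<alpha>)"
  using cell_hcmp_cl unfolding cell_def by blast+

lemma interchange: "\<alpha> \<in> cl K \<Longrightarrow> \<alpha>' \<in> cl K \<Longrightarrow> \<beta> \<in> cl K \<Longrightarrow> \<beta>' \<in> cl K \<Longrightarrow>
  cod2 K \<alpha> = dom2 K \<alpha>' \<Longrightarrow> cod2 K \<beta> = dom2 K \<beta>' \<Longrightarrow> trg1 K (dom2 K \<alpha>) = src1 K (dom2 K \<beta>) \<Longrightarrow>
  hcmp K (vcmp K \<beta>' \<beta>) (vcmp K \<alpha>' \<alpha>) = vcmp K (hcmp K \<beta>' \<alpha>') (hcmp K \<beta> \<alpha>)"
  using interchange_cell[of \<alpha> "dom2 K \<alpha>" "cod2 K \<alpha>" \<alpha>' "cod2 K \<alpha>'" \<beta> "dom2 K \<beta>" "cod2 K \<beta>" \<beta>'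
      "cod2 K \<beta>'" "src1 K (dom2 K \<alpha>)" "trg1 K (dom2 K \<alpha>)" "trg1 K (dom2 K \<beta>)"]
  by (simp add: cell_def arr1_def)

lemma whisker_right_vcmp [simp]: "\<beta> \<in> cl K \<Longrightarrow> \<beta>' \<in> cl K \<Longrightarrow> f \<in> ar K \<Longrightarrow>
  cod2 K \<beta> = dom2 K \<beta>' \<Longrightarrow> trg1 K f = src1 K (dom2 K \<beta>) \<Longrightarrow>
  hcmp K (vcmp K \<beta>' \<beta>) (idc K f) = vcmp K (hcmp K \<beta>' (idc K f)) (hcmp K \<beta> (idc K f))"
  using interchange[of "idc K f" "idc K f" \<beta> \<beta>'] by simp

lemma whisker_left_vcmp [simp]: "\<alpha> \<in> cl K \<Longrightarrow> \<alpha>' \<in> cl K \<Longrightarrow> g \<in> ar K \<Longrightarrow>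
  cod2 K \<alpha> = dom2 K \<alpha>' \<Longrightarrow> trg1 K (dom2 K \<alpha>) = src1 K g \<Longrightarrow>
  hcmp K (idc K g) (vcmp K \<alpha>' \<alpha>) = vcmp K (hcmp K (idc K g) \<alpha>') (hcmp K (idc K g) \<alpha>)"
  using interchange[of \<alpha> \<alpha>' "idc K g" "idc K g"] by simp

text \<open>These lift an equation to the head of a right-nested composite, so that the simplifier
  can apply it inside normalised chains.\<close>

lemma vcmp_eq_extend2: "vcmp K \<beta> \<alpha> = R \<Longrightarrow> \<alpha> \<in> cl K \<Longrightarrow> \<beta> \<in> cl K \<Longrightarrow> X \<in> cl K \<Longrightarrow>
  cod2 K X = dom2 K \<alpha> \<Longrightarrow> cod2 K \<alpha> = dom2 K \<beta> \<Longrightarrow> vcmp K \<beta> (vcmp K \<alpha> X) = vcmp K R X"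
  by (drule sym) simp

lemma vcmp_eq_extend3: "vcmp K \<gamma> (vcmp K \<beta> \<alpha>) = R \<Longrightarrow> \<alpha> \<in> cl K \<Longrightarrow> \<beta> \<in> cl K \<Longrightarrow> \<gamma> \<in> cl K \<Longrightarrow>
  X \<in> cl K \<Longrightarrow> cod2 K X = dom2 K \<alpha> \<Longrightarrow> cod2 K \<alpha> = dom2 K \<beta> \<Longrightarrow> cod2 K \<beta> = dom2 K \<gamma> \<Longrightarrow>
  vcmp K \<gamma> (vcmp K \<beta> (vcmp K \<alpha> X)) = vcmp K R X"
  by (drule sym) simp

end

section \<open>Bilax functors\<close>

locale bilax_setting = K: two_cat K + K': two_cat K'
  for K :: "('o,'a,'c,'x) twocat_scheme" and K' :: "('p,'b,'d,'y) twocat_scheme" +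
  fixes c :: "'a \<Rightarrow> 'a \<Rightarrow> 'c" and c' :: "'b \<Rightarrow> 'b \<Rightarrow> 'd"
    and F0 :: "'o \<Rightarrow> 'p" and F1 :: "'a \<Rightarrow> 'b" and F2 :: "'c \<Rightarrow> 'd"
    and L2 :: "'a \<Rightarrow> 'a \<Rightarrow> 'd" and L0 :: "'o \<Rightarrow> 'd" and C2 :: "'a \<Rightarrow> 'a \<Rightarrow> 'd" and C0 :: "'o \<Rightarrow> 'd"
    and \<nu> :: "'a \<Rightarrow> 'a \<Rightarrow> 'd"
  assumes yb_operator: "yb_operator K c"
    and bilax_functor: "bilax_functor K c K' c' F0 F1 F2 L2 L0 C2 C0 \<nu>"
begin

lemma c_cell: "arr1 K f A A \<Longrightarrow> arr1 K g A A \<Longrightarrow> cell K (c g f) (cmp1 K g f) (cmp1 K f g)"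
  using yb_operator unfolding yb_operator_def by (elim conjE) (simp only:)

lemma F0_in_ob [simp]: "A \<in> ob K \<Longrightarrow> F0 A \<in> ob K'"
  using bilax_functor unfolding bilax_functor_def by (elim conjE) (simp only:)

lemma F1_arr1: "arr1 K f A B \<Longrightarrow> arr1 K' (F1 f) (F0 A) (F0 B)"
  using bilax_functor unfolding bilax_functor_def by (elim conjE) (simp only:)

lemma F2_cell: "cell K \<alpha> f g \<Longrightarrow> cell K' (F2 \<alpha>) (F1 f) (F1 g)"
  using bilax_functor unfolding bilax_functor_def by (elim conjE) (simp only:)

lemma F2_idc [simp]: "f \<in> ar K \<Longrightarrow> F2 (idc K f) = idc K' (F1 f)"
  using bilax_functor unfolding bilax_functor_def by (elim conjE) (simp only:)

lemma F2_vcmp_cell: "cell K \<alpha> f g \<Longrightarrow> cell K \<beta> g h \<Longrightarrow> F2 (vcmp K \<beta> \<alpha>) = vcmp K' (F2 \<beta>) (F2 \<alpha>)"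
  using bilax_functor unfolding bilax_functor_def by (elim conjE) (simp only:)

lemma L2_cell: "arr1 K f A B \<Longrightarrow> arr1 K g B C \<Longrightarrow> cell K' (L2 g f) (cmp1 K' (F1 g) (F1 f)) (F1 (cmp1 K g f))"
  using bilax_functor unfolding bilax_functor_def by (elim conjE) (simp only:)

lemma L0_cell: "A \<in> ob K \<Longrightarrow> cell K' (L0 A) (idn1 K' (F0 A)) (F1 (idn1 K A))"
  using bilax_functor unfolding bilax_functor_def by (elim conjE) (simp only:)

lemma lax_natural_cell: "cell K \<alpha> f f' \<Longrightarrow> cell K \<beta> g g' \<Longrightarrow> arr1 K f A B \<Longrightarrow> arr1 K g B C \<Longrightarrow>
  vcmp K' (F2 (hcmp K \<beta> \<alpha>)) (L2 g f) = vcmp K' (L2 g' f') (hcmp K' (F2 \<beta>) (F2 \<alpha>))"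
  using bilax_functor unfolding bilax_functor_def by (elim conjE) (simp only:)

lemma lax_assoc_arr1: "arr1 K f A B \<Longrightarrow> arr1 K g B C \<Longrightarrow> arr1 K h C D \<Longrightarrow>
  vcmp K' (L2 (cmp1 K h g) f) (hcmp K' (L2 h g) (idc K' (F1 f)))
    = vcmp K' (L2 h (cmp1 K g f)) (hcmp K' (idc K' (F1 h)) (L2 g f))"
  using bilax_functor unfolding bilax_functor_def by (elim conjE) (simp only:)

lemma lax_unit_arr1: "arr1 K f A B \<Longrightarrow>
  vcmp K' (L2 f (idn1 K A)) (hcmp K' (idc K' (F1 f)) (L0 A)) = idc K' (F1 f) \<and>
  vcmp K' (L2 (idn1 K B) f) (hcmp K' (L0 B) (idc K' (F1 f))) = idc K' (F1 f)"
  using bilax_functor unfolding bilax_functor_def by (elim conjE) (simp only:)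

lemma C2_cell: "arr1 K f A B \<Longrightarrow> arr1 K g B C \<Longrightarrow> cell K' (C2 g f) (F1 (cmp1 K g f)) (cmp1 K' (F1 g) (F1 f))"
  using bilax_functor unfolding bilax_functor_def by (elim conjE) (simp only:)

lemma C0_cell: "A \<in> ob K \<Longrightarrow> cell K' (C0 A) (F1 (idn1 K A)) (idn1 K' (F0 A))"
  using bilax_functor unfolding bilax_functor_def by (elim conjE) (simp only:)

lemma colax_natural_cell: "cell K \<alpha> f f' \<Longrightarrow> cell K \<beta> g g' \<Longrightarrow> arr1 K f A B \<Longrightarrow> arr1 K g B C \<Longrightarrow>
  vcmp K' (hcmp K' (F2 \<beta>) (F2 \<alpha>)) (C2 g f) = vcmp K' (C2 g' f') (F2 (hcmp K \<beta> \<alpha>))"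
  using bilax_functor unfolding bilax_functor_def by (elim conjE) (simp only:)

lemma colax_coassoc_arr1: "arr1 K f A B \<Longrightarrow> arr1 K g B C \<Longrightarrow> arr1 K h C D \<Longrightarrow>
  vcmp K' (hcmp K' (C2 h g) (idc K' (F1 f))) (C2 (cmp1 K h g) f)
    = vcmp K' (hcmp K' (idc K' (F1 h)) (C2 g f)) (C2 h (cmp1 K g f))"
  using bilax_functor unfolding bilax_functor_def by (elim conjE) (simp only:)

lemma colax_counit_arr1: "arr1 K f A B \<Longrightarrow>
  vcmp K' (hcmp K' (idc K' (F1 f)) (C0 A)) (C2 f (idn1 K A)) = idc K' (F1 f) \<and>
  vcmp K' (hcmp K' (C0 B) (idc K' (F1 f))) (C2 (idn1 K B) f) = idc K' (F1 f)"
  using bilax_functor unfolding bilax_functor_def by (elim conjE) (simp only:)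

lemma nu_cell: "arr1 K f A A \<Longrightarrow> arr1 K g A A \<Longrightarrow> cell K' (\<nu> f g) (cmp1 K' (F1 f) (F1 g)) (cmp1 K' (F1 g) (F1 f))"
  using bilax_functor unfolding bilax_functor_def by (elim conjE) (simp only:)

lemma nu_natural_cell: "arr1 K f A A \<Longrightarrow> arr1 K g A A \<Longrightarrow> cell K \<alpha> f f' \<Longrightarrow> cell K \<beta> g g' \<Longrightarrow>
  vcmp K' (\<nu> f' g') (hcmp K' (F2 \<alpha>) (F2 \<beta>)) = vcmp K' (hcmp K' (F2 \<beta>) (F2 \<alpha>)) (\<nu> f g)"
  using bilax_functor unfolding bilax_functor_def by (elim conjE) (simp only:)

lemma nu_lax_left_arr1: "arr1 K f A A \<Longrightarrow> arr1 K g A A \<Longrightarrow> arr1 K h A A \<Longrightarrow>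
  vcmp K' (\<nu> f (cmp1 K g h)) (hcmp K' (idc K' (F1 f)) (L2 g h))
    = vcmp K' (hcmp K' (L2 g h) (idc K' (F1 f)))
        (vcmp K' (hcmp K' (idc K' (F1 g)) (\<nu> f h)) (hcmp K' (\<nu> f g) (idc K' (F1 h))))"
  using bilax_functor unfolding bilax_functor_def by (elim conjE) (simp only:)

lemma nu_lax_right_arr1: "arr1 K f A A \<Longrightarrow> arr1 K g A A \<Longrightarrow> arr1 K h A A \<Longrightarrow>
  vcmp K' (\<nu> (cmp1 K g h) f) (hcmp K' (L2 g h) (idc K' (F1 f)))
    = vcmp K' (hcmp K' (idc K' (F1 f)) (L2 g h))
        (vcmp K' (hcmp K' (\<nu> g f) (idc K' (F1 h))) (hcmp K' (idc K' (F1 g)) (\<nu> h f)))"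
  using bilax_functor unfolding bilax_functor_def by (elim conjE) (simp only:)

lemma nu_lax_unit_arr1: "arr1 K f A A \<Longrightarrow>
  vcmp K' (\<nu> f (idn1 K A)) (hcmp K' (idc K' (F1 f)) (L0 A)) = hcmp K' (L0 A) (idc K' (F1 f)) \<and>
  vcmp K' (\<nu> (idn1 K A) f) (hcmp K' (L0 A) (idc K' (F1 f))) = hcmp K' (idc K' (F1 f)) (L0 A)"
  using bilax_functor unfolding bilax_functor_def by (elim conjE) (simp only:)

lemma nu_colax_left_arr1: "arr1 K f A A \<Longrightarrow> arr1 K g A A \<Longrightarrow> arr1 K h A A \<Longrightarrow>
  vcmp K' (hcmp K' (C2 g h) (idc K' (F1 f))) (\<nu> f (cmp1 K g h))
    = vcmp K' (hcmp K' (idc K' (F1 g)) (\<nu> f h))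
        (vcmp K' (hcmp K' (\<nu> f g) (idc K' (F1 h))) (hcmp K' (idc K' (F1 f)) (C2 g h)))"
  using bilax_functor unfolding bilax_functor_def by (elim conjE) (simp only:)

lemma nu_colax_right_arr1: "arr1 K f A A \<Longrightarrow> arr1 K g A A \<Longrightarrow> arr1 K h A A \<Longrightarrow>
  vcmp K' (hcmp K' (idc K' (F1 f)) (C2 g h)) (\<nu> (cmp1 K g h) f)
    = vcmp K' (hcmp K' (\<nu> g f) (idc K' (F1 h)))
        (vcmp K' (hcmp K' (idc K' (F1 g)) (\<nu> h f)) (hcmp K' (C2 g h) (idc K' (F1 f))))"
  using bilax_functor unfolding bilax_functor_def by (elim conjE) (simp only:)

lemma nu_colax_unit_arr1: "arr1 K f A A \<Longrightarrow>
  vcmp K' (hcmp K' (C0 A) (idc K' (F1 f))) (\<nu> f (idn1 K A)) = hcmp K' (idc K' (F1 f)) (C0 A) \<and>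
  vcmp K' (hcmp K' (idc K' (F1 f)) (C0 A)) (\<nu> (idn1 K A) f) = hcmp K' (C0 A) (idc K' (F1 f))"
  using bilax_functor unfolding bilax_functor_def by (elim conjE) (simp only:)

lemma bilaxity_arr1: "arr1 K k A B \<Longrightarrow> arr1 K h B B \<Longrightarrow> arr1 K f B B \<Longrightarrow> arr1 K g B C \<Longrightarrow>
  vcmp K' (hcmp K' (L2 g h) (L2 f k))
    (vcmp K' (hcmp K' (idc K' (F1 g)) (hcmp K' (\<nu> f h) (idc K' (F1 k)))) (hcmp K' (C2 g f) (C2 h k)))
  = vcmp K' (C2 (cmp1 K g h) (cmp1 K f k))
      (vcmp K' (F2 (hcmp K (idc K g) (hcmp K (c f h) (idc K k)))) (L2 (cmp1 K g f) (cmp1 K h k)))"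
  using bilax_functor unfolding bilax_functor_def by (elim conjE) (simp only:)

lemma bilax_units: "A \<in> ob K \<Longrightarrow>
  hcmp K' (L0 A) (L0 A) = vcmp K' (C2 (idn1 K A) (idn1 K A)) (L0 A) \<and>
  hcmp K' (C0 A) (C0 A) = vcmp K' (C0 A) (L2 (idn1 K A) (idn1 K A)) \<and>
  vcmp K' (C0 A) (L0 A) = idc K' (idn1 K' (F0 A))"
  using bilax_functor unfolding bilax_functor_def by (elim conjE) (simp only:)


lemma F1_in_ar [simp]: "f \<in> ar K \<Longrightarrow> F1 f \<in> ar K'"
  and src1_F1 [simp]: "f \<in> ar K \<Longrightarrow> src1 K' (F1 f) = F0 (src1 K f)"
  and trg1_F1 [simp]: "f \<in> ar K \<Longrightarrow> trg1 K' (F1 f) = F0 (trg1 K f)"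
  using F1_arr1[of f "src1 K f" "trg1 K f"] by (simp_all add: arr1_def)

lemma F2_in_cl [simp]: "\<alpha> \<in> cl K \<Longrightarrow> F2 \<alpha> \<in> cl K'"
  and dom2_F2 [simp]: "\<alpha> \<in> cl K \<Longrightarrow> dom2 K' (F2 \<alpha>) = F1 (dom2 K \<alpha>)"
  and cod2_F2 [simp]: "\<alpha> \<in> cl K \<Longrightarrow> cod2 K' (F2 \<alpha>) = F1 (cod2 K \<alpha>)"
  using F2_cell[OF K.cell_self] unfolding cell_def by blast+

lemma F2_vcmp: "\<alpha> \<in> cl K \<Longrightarrow> \<beta> \<in> cl K \<Longrightarrow> cod2 K \<alpha> = dom2 K \<beta> \<Longrightarrow>
  F2 (vcmp K \<beta> \<alpha>) = vcmp K' (F2 \<beta>) (F2 \<alpha>)"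
  by (rule F2_vcmp_cell[of \<alpha> "dom2 K \<alpha>" "cod2 K \<alpha>" \<beta> "cod2 K \<beta>"]) (simp_all add: cell_def)

lemma L2_in_cl [simp]: "f \<in> ar K \<Longrightarrow> g \<in> ar K \<Longrightarrow> trg1 K f = src1 K g \<Longrightarrow> L2 g f \<in> cl K'"
  and dom2_L2 [simp]: "f \<in> ar K \<Longrightarrow> g \<in> ar K \<Longrightarrow> trg1 K f = src1 K g \<Longrightarrow>
    dom2 K' (L2 g f) = cmp1 K' (F1 g) (F1 f)"
  and cod2_L2 [simp]: "f \<in> ar K \<Longrightarrow> g \<in> ar K \<Longrightarrow> trg1 K f = src1 K g \<Longrightarrow>
    cod2 K' (L2 g f) = F1 (cmp1 K g f)"
  using L2_cell[of f "src1 K f" "trg1 K f" g "trg1 K g"] by (simp_all add: cell_def arr1_def)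

lemma C2_in_cl [simp]: "f \<in> ar K \<Longrightarrow> g \<in> ar K \<Longrightarrow> trg1 K f = src1 K g \<Longrightarrow> C2 g f \<in> cl K'"
  and dom2_C2 [simp]: "f \<in> ar K \<Longrightarrow> g \<in> ar K \<Longrightarrow> trg1 K f = src1 K g \<Longrightarrow>
    dom2 K' (C2 g f) = F1 (cmp1 K g f)"
  and cod2_C2 [simp]: "f \<in> ar K \<Longrightarrow> g \<in> ar K \<Longrightarrow> trg1 K f = src1 K g \<Longrightarrow>
    cod2 K' (C2 g f) = cmp1 K' (F1 g) (F1 f)"
  using C2_cell[of f "src1 K f" "trg1 K f" g "trg1 K g"] by (simp_all add: cell_def arr1_def)

lemma L0_in_cl [simp]: "A \<in> ob K \<Longrightarrow> L0 A \<in> cl K'"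
  and dom2_L0 [simp]: "A \<in> ob K \<Longrightarrow> dom2 K' (L0 A) = idn1 K' (F0 A)"
  and cod2_L0 [simp]: "A \<in> ob K \<Longrightarrow> cod2 K' (L0 A) = F1 (idn1 K A)"
  using L0_cell unfolding cell_def by blast+

lemma C0_in_cl [simp]: "A \<in> ob K \<Longrightarrow> C0 A \<in> cl K'"
  and dom2_C0 [simp]: "A \<in> ob K \<Longrightarrow> dom2 K' (C0 A) = F1 (idn1 K A)"
  and cod2_C0 [simp]: "A \<in> ob K \<Longrightarrow> cod2 K' (C0 A) = idn1 K' (F0 A)"
  using C0_cell unfolding cell_def by blast+

lemma nu_in_cl [simp]: "f \<in> ar K \<Longrightarrow> g \<in> ar K \<Longrightarrow> trg1 K f = src1 K f \<Longrightarrow> src1 K g = src1 K f \<Longrightarrow>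
    trg1 K g = src1 K f \<Longrightarrow> \<nu> f g \<in> cl K'"
  and dom2_nu [simp]: "f \<in> ar K \<Longrightarrow> g \<in> ar K \<Longrightarrow> trg1 K f = src1 K f \<Longrightarrow> src1 K g = src1 K f \<Longrightarrow>
    trg1 K g = src1 K f \<Longrightarrow> dom2 K' (\<nu> f g) = cmp1 K' (F1 f) (F1 g)"
  and cod2_nu [simp]: "f \<in> ar K \<Longrightarrow> g \<in> ar K \<Longrightarrow> trg1 K f = src1 K f \<Longrightarrow> src1 K g = src1 K f \<Longrightarrow>
    trg1 K g = src1 K f \<Longrightarrow> cod2 K' (\<nu> f g) = cmp1 K' (F1 g) (F1 f)"
  using nu_cell[of f "src1 K f" g] by (simp_all add: cell_def arr1_def)

lemma c_in_cl [simp]: "f \<in> ar K \<Longrightarrow> g \<in> ar K \<Longrightarrow> trg1 K f = src1 K f \<Longrightarrow> src1 K g = src1 K f \<Longrightarrow>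
    trg1 K g = src1 K f \<Longrightarrow> c g f \<in> cl K"
  and dom2_c [simp]: "f \<in> ar K \<Longrightarrow> g \<in> ar K \<Longrightarrow> trg1 K f = src1 K f \<Longrightarrow> src1 K g = src1 K f \<Longrightarrow>
    trg1 K g = src1 K f \<Longrightarrow> dom2 K (c g f) = cmp1 K g f"
  and cod2_c [simp]: "f \<in> ar K \<Longrightarrow> g \<in> ar K \<Longrightarrow> trg1 K f = src1 K f \<Longrightarrow> src1 K g = src1 K f \<Longrightarrow>
    trg1 K g = src1 K f \<Longrightarrow> cod2 K (c g f) = cmp1 K f g"
  using c_cell[of f "src1 K f" g] by (simp_all add: cell_def arr1_def)

lemma lax_natural:
  "\<alpha> \<in> cl K \<Longrightarrow> \<beta> \<in> cl K \<Longrightarrow> trg1 K (dom2 K \<alpha>) = src1 K (dom2 K \<beta>) \<Longrightarrow>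
   f' = cod2 K \<alpha> \<Longrightarrow> g' = cod2 K \<beta> \<Longrightarrow>
   vcmp K' (L2 g' f') (hcmp K' (F2 \<beta>) (F2 \<alpha>)) = vcmp K' (F2 (hcmp K \<beta> \<alpha>)) (L2 (dom2 K \<beta>) (dom2 K \<alpha>))"
  using lax_natural_cell[of \<alpha> "dom2 K \<alpha>" f' \<beta> "dom2 K \<beta>" g' "src1 K (dom2 K \<alpha>)"
      "trg1 K (dom2 K \<alpha>)" "trg1 K (dom2 K \<beta>)"]
  by (simp add: cell_def arr1_def)


lemma lax_natural_whisker_left:
  "\<alpha> \<in> cl K \<Longrightarrow> g \<in> ar K \<Longrightarrow> trg1 K (dom2 K \<alpha>) = src1 K g \<Longrightarrow> f' = cod2 K \<alpha> \<Longrightarrow>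
   vcmp K' (L2 g f') (hcmp K' (idc K' (F1 g)) (F2 \<alpha>))
     = vcmp K' (F2 (hcmp K (idc K g) \<alpha>)) (L2 g (dom2 K \<alpha>))"
  using lax_natural[of \<alpha> "idc K g" f' g] by simp

lemma lax_natural_whisker_right:
  "\<beta> \<in> cl K \<Longrightarrow> f \<in> ar K \<Longrightarrow> trg1 K f = src1 K (dom2 K \<beta>) \<Longrightarrow> g' = cod2 K \<beta> \<Longrightarrow>
   vcmp K' (L2 g' f) (hcmp K' (F2 \<beta>) (idc K' (F1 f)))
     = vcmp K' (F2 (hcmp K \<beta> (idc K f))) (L2 (dom2 K \<beta>) f)"
  using lax_natural[of "idc K f" \<beta> f g'] by simp

lemma lax_assoc: "f \<in> ar K \<Longrightarrow> g \<in> ar K \<Longrightarrow> h \<in> ar K \<Longrightarrow> trg1 K f = src1 K g \<Longrightarrow> trg1 K g = src1 K h \<Longrightarrow>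
  vcmp K' (L2 (cmp1 K h g) f) (hcmp K' (L2 h g) (idc K' (F1 f)))
    = vcmp K' (L2 h (cmp1 K g f)) (hcmp K' (idc K' (F1 h)) (L2 g f))"
  using lax_assoc_arr1[of f "src1 K f" "trg1 K f" g "trg1 K g" h "trg1 K h"] by (simp add: arr1_def)

lemma lax_unit_right: "f \<in> ar K \<Longrightarrow> src1 K f = A \<Longrightarrow>
    vcmp K' (L2 f (idn1 K A)) (hcmp K' (idc K' (F1 f)) (L0 A)) = idc K' (F1 f)"
  and lax_unit_left: "f \<in> ar K \<Longrightarrow> trg1 K f = B \<Longrightarrow>
    vcmp K' (L2 (idn1 K B) f) (hcmp K' (L0 B) (idc K' (F1 f))) = idc K' (F1 f)"
  using lax_unit_arr1[of f "src1 K f" "trg1 K f"] by (auto simp: arr1_def)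

lemma colax_natural:
  "\<alpha> \<in> cl K \<Longrightarrow> \<beta> \<in> cl K \<Longrightarrow> trg1 K (dom2 K \<alpha>) = src1 K (dom2 K \<beta>) \<Longrightarrow>
   f = dom2 K \<alpha> \<Longrightarrow> g = dom2 K \<beta> \<Longrightarrow>
   vcmp K' (hcmp K' (F2 \<beta>) (F2 \<alpha>)) (C2 g f) = vcmp K' (C2 (cod2 K \<beta>) (cod2 K \<alpha>)) (F2 (hcmp K \<beta> \<alpha>))"
  using colax_natural_cell[of \<alpha> f "cod2 K \<alpha>" \<beta> g "cod2 K \<beta>" "src1 K f" "trg1 K f" "trg1 K g"]
  by (simp add: cell_def arr1_def)

lemma colax_natural_whisker_left:
  "\<alpha> \<in> cl K \<Longrightarrow> g \<in> ar K \<Longrightarrow> trg1 K (dom2 K \<alpha>) = src1 K g \<Longrightarrow> f = dom2 K \<alpha> \<Longrightarrow>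
   vcmp K' (hcmp K' (idc K' (F1 g)) (F2 \<alpha>)) (C2 g f)
     = vcmp K' (C2 g (cod2 K \<alpha>)) (F2 (hcmp K (idc K g) \<alpha>))"
  using colax_natural[of \<alpha> "idc K g" f g] by simp

lemma colax_natural_whisker_right:
  "\<beta> \<in> cl K \<Longrightarrow> f \<in> ar K \<Longrightarrow> trg1 K f = src1 K (dom2 K \<beta>) \<Longrightarrow> g = dom2 K \<beta> \<Longrightarrow>
   vcmp K' (hcmp K' (F2 \<beta>) (idc K' (F1 f))) (C2 g f)
     = vcmp K' (C2 (cod2 K \<beta>) f) (F2 (hcmp K \<beta> (idc K f)))"
  using colax_natural[of "idc K f" \<beta> f g] by simp

lemma colax_coassoc: "f \<in> ar K \<Longrightarrow> g \<in> ar K \<Longrightarrow> h \<in> ar K \<Longrightarrow> trg1 K f = src1 K g \<Longrightarrow> trg1 K g = src1 K h \<Longrightarrow>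
  vcmp K' (hcmp K' (C2 h g) (idc K' (F1 f))) (C2 (cmp1 K h g) f)
    = vcmp K' (hcmp K' (idc K' (F1 h)) (C2 g f)) (C2 h (cmp1 K g f))"
  using colax_coassoc_arr1[of f "src1 K f" "trg1 K f" g "trg1 K g" h "trg1 K h"] by (simp add: arr1_def)

lemma colax_counit_right: "f \<in> ar K \<Longrightarrow> src1 K f = A \<Longrightarrow>
    vcmp K' (hcmp K' (idc K' (F1 f)) (C0 A)) (C2 f (idn1 K A)) = idc K' (F1 f)"
  and colax_counit_left: "f \<in> ar K \<Longrightarrow> trg1 K f = B \<Longrightarrow>
    vcmp K' (hcmp K' (C0 B) (idc K' (F1 f))) (C2 (idn1 K B) f) = idc K' (F1 f)"
  using colax_counit_arr1[of f "src1 K f" "trg1 K f"] by (auto simp: arr1_def)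


lemma nu_natural:
  assumes "\<alpha> \<in> cl K" "\<beta> \<in> cl K" "trg1 K (dom2 K \<alpha>) = src1 K (dom2 K \<alpha>)"
    "src1 K (dom2 K \<beta>) = src1 K (dom2 K \<alpha>)" "trg1 K (dom2 K \<beta>) = src1 K (dom2 K \<alpha>)"
  shows "vcmp K' (\<nu> (cod2 K \<alpha>) (cod2 K \<beta>)) (hcmp K' (F2 \<alpha>) (F2 \<beta>))
    = vcmp K' (hcmp K' (F2 \<beta>) (F2 \<alpha>)) (\<nu> (dom2 K \<alpha>) (dom2 K \<beta>))"
  using nu_natural_cell[of "dom2 K \<alpha>" "src1 K (dom2 K \<alpha>)" "dom2 K \<beta>" \<alpha> "cod2 K \<alpha>" \<beta> "cod2 K \<beta>"] assms
  by (simp add: cell_def arr1_def)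

lemma nu_natural_right:
  "\<alpha> \<in> cl K \<Longrightarrow> f \<in> ar K \<Longrightarrow> trg1 K f = src1 K f \<Longrightarrow> src1 K (dom2 K \<alpha>) = src1 K f \<Longrightarrow>
   trg1 K (dom2 K \<alpha>) = src1 K f \<Longrightarrow> g' = cod2 K \<alpha> \<Longrightarrow>
   vcmp K' (\<nu> f g') (hcmp K' (idc K' (F1 f)) (F2 \<alpha>))
     = vcmp K' (hcmp K' (F2 \<alpha>) (idc K' (F1 f))) (\<nu> f (dom2 K \<alpha>))"
  using nu_natural[of "idc K f" \<alpha>] by simp

lemma nu_natural_left:
  "\<alpha> \<in> cl K \<Longrightarrow> f \<in> ar K \<Longrightarrow> trg1 K f = src1 K f \<Longrightarrow> src1 K (dom2 K \<alpha>) = src1 K f \<Longrightarrow>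
   trg1 K (dom2 K \<alpha>) = src1 K f \<Longrightarrow> g' = cod2 K \<alpha> \<Longrightarrow>
   vcmp K' (\<nu> g' f) (hcmp K' (F2 \<alpha>) (idc K' (F1 f)))
     = vcmp K' (hcmp K' (idc K' (F1 f)) (F2 \<alpha>)) (\<nu> (dom2 K \<alpha>) f)"
  using nu_natural[of \<alpha> "idc K f"] by simp

lemma nu_natural_right_rev:
  "\<alpha> \<in> cl K \<Longrightarrow> f \<in> ar K \<Longrightarrow> trg1 K f = src1 K f \<Longrightarrow> src1 K (dom2 K \<alpha>) = src1 K f \<Longrightarrow>
   trg1 K (dom2 K \<alpha>) = src1 K f \<Longrightarrow> g = dom2 K \<alpha> \<Longrightarrow>
   vcmp K' (hcmp K' (F2 \<alpha>) (idc K' (F1 f))) (\<nu> f g)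
     = vcmp K' (\<nu> f (cod2 K \<alpha>)) (hcmp K' (idc K' (F1 f)) (F2 \<alpha>))"
  using nu_natural_right[of \<alpha> f "cod2 K \<alpha>"] by simp

lemma nu_natural_left_rev:
  "\<alpha> \<in> cl K \<Longrightarrow> f \<in> ar K \<Longrightarrow> trg1 K f = src1 K f \<Longrightarrow> src1 K (dom2 K \<alpha>) = src1 K f \<Longrightarrow>
   trg1 K (dom2 K \<alpha>) = src1 K f \<Longrightarrow> g = dom2 K \<alpha> \<Longrightarrow>
   vcmp K' (hcmp K' (idc K' (F1 f)) (F2 \<alpha>)) (\<nu> g f)
     = vcmp K' (\<nu> (cod2 K \<alpha>) f) (hcmp K' (F2 \<alpha>) (idc K' (F1 f)))"
  using nu_natural_left[of \<alpha> f "cod2 K \<alpha>"] by simp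

lemma nu_lax_left: "f \<in> ar K \<Longrightarrow> g \<in> ar K \<Longrightarrow> h \<in> ar K \<Longrightarrow> trg1 K f = src1 K f \<Longrightarrow>
  src1 K g = src1 K f \<Longrightarrow> trg1 K g = src1 K f \<Longrightarrow> src1 K h = src1 K f \<Longrightarrow> trg1 K h = src1 K f \<Longrightarrow>
  vcmp K' (\<nu> f (cmp1 K g h)) (hcmp K' (idc K' (F1 f)) (L2 g h))
    = vcmp K' (hcmp K' (L2 g h) (idc K' (F1 f)))
        (vcmp K' (hcmp K' (idc K' (F1 g)) (\<nu> f h)) (hcmp K' (\<nu> f g) (idc K' (F1 h))))"
  using nu_lax_left_arr1[of f "src1 K f" g h] by (simp add: arr1_def)

lemma nu_lax_right: "f \<in> ar K \<Longrightarrow> g \<in> ar K \<Longrightarrow> h \<in> ar K \<Longrightarrow> trg1 K f = src1 K f \<Longrightarrow>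
  src1 K g = src1 K f \<Longrightarrow> trg1 K g = src1 K f \<Longrightarrow> src1 K h = src1 K f \<Longrightarrow> trg1 K h = src1 K f \<Longrightarrow>
  vcmp K' (\<nu> (cmp1 K g h) f) (hcmp K' (L2 g h) (idc K' (F1 f)))
    = vcmp K' (hcmp K' (idc K' (F1 f)) (L2 g h))
        (vcmp K' (hcmp K' (\<nu> g f) (idc K' (F1 h))) (hcmp K' (idc K' (F1 g)) (\<nu> h f)))"
  using nu_lax_right_arr1[of f "src1 K f" g h] by (simp add: arr1_def)

lemma nu_lax_unit_right: "f \<in> ar K \<Longrightarrow> src1 K f = A \<Longrightarrow> trg1 K f = A \<Longrightarrow>
    vcmp K' (\<nu> f (idn1 K A)) (hcmp K' (idc K' (F1 f)) (L0 A)) = hcmp K' (L0 A) (idc K' (F1 f))"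
  and nu_lax_unit_left: "f \<in> ar K \<Longrightarrow> src1 K f = A \<Longrightarrow> trg1 K f = A \<Longrightarrow>
    vcmp K' (\<nu> (idn1 K A) f) (hcmp K' (L0 A) (idc K' (F1 f))) = hcmp K' (idc K' (F1 f)) (L0 A)"
  using nu_lax_unit_arr1[of f A] by (auto simp: arr1_def)

lemma nu_colax_left: "f \<in> ar K \<Longrightarrow> g \<in> ar K \<Longrightarrow> h \<in> ar K \<Longrightarrow> trg1 K f = src1 K f \<Longrightarrow>
  src1 K g = src1 K f \<Longrightarrow> trg1 K g = src1 K f \<Longrightarrow> src1 K h = src1 K f \<Longrightarrow> trg1 K h = src1 K f \<Longrightarrow>
  vcmp K' (hcmp K' (C2 g h) (idc K' (F1 f))) (\<nu> f (cmp1 K g h))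
    = vcmp K' (hcmp K' (idc K' (F1 g)) (\<nu> f h))
        (vcmp K' (hcmp K' (\<nu> f g) (idc K' (F1 h))) (hcmp K' (idc K' (F1 f)) (C2 g h)))"
  using nu_colax_left_arr1[of f "src1 K f" g h] by (simp add: arr1_def)

lemma nu_colax_right: "f \<in> ar K \<Longrightarrow> g \<in> ar K \<Longrightarrow> h \<in> ar K \<Longrightarrow> trg1 K f = src1 K f \<Longrightarrow>
  src1 K g = src1 K f \<Longrightarrow> trg1 K g = src1 K f \<Longrightarrow> src1 K h = src1 K f \<Longrightarrow> trg1 K h = src1 K f \<Longrightarrow>
  vcmp K' (hcmp K' (idc K' (F1 f)) (C2 g h)) (\<nu> (cmp1 K g h) f)
    = vcmp K' (hcmp K' (\<nu> g f) (idc K' (F1 h)))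
        (vcmp K' (hcmp K' (idc K' (F1 g)) (\<nu> h f)) (hcmp K' (C2 g h) (idc K' (F1 f))))"
  using nu_colax_right_arr1[of f "src1 K f" g h] by (simp add: arr1_def)

lemma nu_colax_unit_right: "f \<in> ar K \<Longrightarrow> src1 K f = A \<Longrightarrow> trg1 K f = A \<Longrightarrow>
    vcmp K' (hcmp K' (C0 A) (idc K' (F1 f))) (\<nu> f (idn1 K A)) = hcmp K' (idc K' (F1 f)) (C0 A)"
  and nu_colax_unit_left: "f \<in> ar K \<Longrightarrow> src1 K f = A \<Longrightarrow> trg1 K f = A \<Longrightarrow>
    vcmp K' (hcmp K' (idc K' (F1 f)) (C0 A)) (\<nu> (idn1 K A) f) = hcmp K' (C0 A) (idc K' (F1 f))"
  using nu_colax_unit_arr1[of f A] by (auto simp: arr1_def)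

lemma bilaxity: "k \<in> ar K \<Longrightarrow> h \<in> ar K \<Longrightarrow> f \<in> ar K \<Longrightarrow> g \<in> ar K \<Longrightarrow>
  trg1 K k = src1 K h \<Longrightarrow> trg1 K h = src1 K h \<Longrightarrow> src1 K f = src1 K h \<Longrightarrow> trg1 K f = src1 K h \<Longrightarrow>
  src1 K g = src1 K h \<Longrightarrow>
  vcmp K' (hcmp K' (L2 g h) (L2 f k))
    (vcmp K' (hcmp K' (idc K' (F1 g)) (hcmp K' (\<nu> f h) (idc K' (F1 k)))) (hcmp K' (C2 g f) (C2 h k)))
  = vcmp K' (C2 (cmp1 K g h) (cmp1 K f k))
      (vcmp K' (F2 (hcmp K (idc K g) (hcmp K (c f h) (idc K k)))) (L2 (cmp1 K g f) (cmp1 K h k)))"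
  using bilaxity_arr1[of k "src1 K k" "src1 K h" h f g "trg1 K g"] by (simp add: arr1_def)

lemma L0_hcmp_L0: "A \<in> ob K \<Longrightarrow> hcmp K' (L0 A) (L0 A) = vcmp K' (C2 (idn1 K A) (idn1 K A)) (L0 A)"
  and C0_hcmp_C0: "A \<in> ob K \<Longrightarrow> hcmp K' (C0 A) (C0 A) = vcmp K' (C0 A) (L2 (idn1 K A) (idn1 K A))"
  and C0_vcmp_L0: "A \<in> ob K \<Longrightarrow> vcmp K' (C0 A) (L0 A) = idc K' (idn1 K' (F0 A))"
  using bilax_units by blast+

section \<open>Transport of bimonads and their modules\<close>

text \<open>Rewriting with these rules moves \<open>\<F>\<^sup>2\<close> towards the source and \<open>\<F>\<^sub>2\<close> towards the
  target of a composite and merges adjacent images of \<open>\<F>\<close>, so both sides of a transported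
  law reach a common normal form.\<close>

lemmas lax_rules = lax_natural lax_natural_whisker_left lax_natural_whisker_right
  lax_assoc lax_unit_left lax_unit_right F2_vcmp[symmetric]

lemmas colax_rules = colax_natural colax_natural_whisker_left colax_natural_whisker_right
  colax_coassoc colax_counit_left colax_counit_right F2_vcmp[symmetric]

lemma monad_image:
  assumes "monad K A b \<mu> \<eta>"
  shows "monad K' (F0 A) (F1 b) (vcmp K' (F2 \<mu>) (L2 b b)) (vcmp K' (F2 \<eta>) (L0 A))"
  using assms unfolding monad_def cell_def arr1_def
  by (simp add: lax_rules lax_rules[THEN K'.vcmp_eq_extend2])

lemma comonad_image:
  assumes "comonad K A b \<Delta> \<epsilon>"
  shows "comonad K' (F0 A) (F1 b) (vcmp K' (C2 b b) (F2 \<Delta>)) (vcmp K' (C0 A) (F2 \<epsilon>))"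
  using assms unfolding comonad_def cell_def arr1_def
  by (simp add: colax_rules colax_rules[THEN K'.vcmp_eq_extend2])

lemma right_module_image:
  assumes "arr1 K b A A" "arr1 K x A B" "cell K \<mu> (cmp1 K b b) b" "cell K \<eta> (idn1 K A) b"
    and "right_module K b \<mu> \<eta> x act"
  shows "right_module K' (F1 b) (vcmp K' (F2 \<mu>) (L2 b b)) (vcmp K' (F2 \<eta>) (L0 A))
           (F1 x) (vcmp K' (F2 act) (L2 x b))"
  using assms unfolding right_module_def cell_def arr1_def
  by (simp add: lax_rules lax_rules[THEN K'.vcmp_eq_extend2])

lemma right_comodule_image:
  assumes "arr1 K b A A" "arr1 K x A B" "cell K \<Delta> b (cmp1 K b b)" "cell K \<epsilon> b (idn1 K A)"
    and "right_comodule K b \<Delta> \<epsilon> x coact"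
  shows "right_comodule K' (F1 b) (vcmp K' (C2 b b) (F2 \<Delta>)) (vcmp K' (C0 A) (F2 \<epsilon>))
           (F1 x) (vcmp K' (C2 x b) (F2 coact))"
  using assms unfolding right_comodule_def cell_def arr1_def
  by (simp add: colax_rules colax_rules[THEN K'.vcmp_eq_extend2])

lemma monad_distributive_law_image:
  assumes "arr1 K b A A" "cell K \<mu> (cmp1 K b b) b" "cell K \<eta> (idn1 K A) b"
  shows "monad_distributive_law K' (F1 b) (vcmp K' (F2 \<mu>) (L2 b b)) (vcmp K' (F2 \<eta>) (L0 A)) (\<nu> b b)"
  using assms unfolding monad_distributive_law_def cell_def arr1_def
  by (simp add:
      nu_natural_left[THEN K'.vcmp_eq_extend2] nu_natural_right[THEN K'.vcmp_eq_extend2]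
      nu_lax_left nu_lax_right nu_lax_unit_left nu_lax_unit_right)

lemma comonad_distributive_law_image:
  assumes "arr1 K b A A" "cell K \<Delta> b (cmp1 K b b)" "cell K \<epsilon> b (idn1 K A)"
  shows "comonad_distributive_law K' (F1 b) (vcmp K' (C2 b b) (F2 \<Delta>)) (vcmp K' (C0 A) (F2 \<epsilon>)) (\<nu> b b)"
  using assms unfolding comonad_distributive_law_def cell_def arr1_def
  by (simp add: nu_natural_left_rev nu_natural_right_rev
      nu_natural_left_rev[THEN K'.vcmp_eq_extend2] nu_natural_right_rev[THEN K'.vcmp_eq_extend2]
      nu_colax_unit_left nu_colax_unit_right
      nu_colax_left[THEN K'.vcmp_eq_extend2] nu_colax_right[THEN K'.vcmp_eq_extend2]
      nu_colax_unit_left[THEN K'.vcmp_eq_extend2] nu_colax_unit_right[THEN K'.vcmp_eq_extend2])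

lemma bilaxity_transport:
  assumes arrows: "arr1 K k A B" "arr1 K h B B" "arr1 K f B B" "arr1 K g B C"
    and cells: "cell K \<alpha> (cmp1 K g h) g'" "cell K \<beta> (cmp1 K f k) f'"
      "cell K \<gamma> g'' (cmp1 K g f)" "cell K \<delta> k'' (cmp1 K h k)"
  shows "vcmp K' (hcmp K' (vcmp K' (F2 \<alpha>) (L2 g h)) (vcmp K' (F2 \<beta>) (L2 f k)))
           (vcmp K' (hcmp K' (idc K' (F1 g)) (hcmp K' (\<nu> f h) (idc K' (F1 k))))
             (hcmp K' (vcmp K' (C2 g f) (F2 \<gamma>)) (vcmp K' (C2 h k) (F2 \<delta>))))
       = vcmp K' (C2 g' f')
           (vcmp K' (F2 (vcmp K (hcmp K \<alpha> \<beta>)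
                          (vcmp K (hcmp K (idc K g) (hcmp K (c f h) (idc K k))) (hcmp K \<gamma> \<delta>))))
             (L2 g'' k''))"
proof -
  note typing = arrows[unfolded arr1_def] cells[unfolded cell_def]
  have "arr1 K g' B C" "arr1 K f' A B" "arr1 K g'' B C" "arr1 K k'' A B"
    using K.arr1_cod2[OF cells(1) K.arr1_cmp1[OF arrows(2,4)]]
      K.arr1_cod2[OF cells(2) K.arr1_cmp1[OF arrows(1,3)]]
      K.arr1_dom2[OF cells(3) K.arr1_cmp1[OF arrows(3,4)]]
      K.arr1_dom2[OF cells(4) K.arr1_cmp1[OF arrows(1,2)]] .
  then have typing_ends: "g' \<in> ar K" "src1 K g' = B" "trg1 K g' = C" "f' \<in> ar K" "src1 K f' = A"
      "trg1 K f' = B" "g'' \<in> ar K" "src1 K g'' = B" "trg1 K g'' = C" "k'' \<in> ar K"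
      "src1 K k'' = A" "trg1 K k'' = B"
    unfolding arr1_def by blast+
  let ?\<nu>\<^sub>1 = "hcmp K' (idc K' (F1 g)) (hcmp K' (\<nu> f h) (idc K' (F1 k)))"
  let ?c\<^sub>1 = "hcmp K (idc K g) (hcmp K (c f h) (idc K k))"
  have "vcmp K' (hcmp K' (vcmp K' (F2 \<alpha>) (L2 g h)) (vcmp K' (F2 \<beta>) (L2 f k)))
          (vcmp K' ?\<nu>\<^sub>1 (hcmp K' (vcmp K' (C2 g f) (F2 \<gamma>)) (vcmp K' (C2 h k) (F2 \<delta>))))
      = vcmp K' (hcmp K' (F2 \<alpha>) (F2 \<beta>)) (vcmp K' (hcmp K' (L2 g h) (L2 f k))
          (vcmp K' ?\<nu>\<^sub>1 (vcmp K' (hcmp K' (C2 g f) (C2 h k)) (hcmp K' (F2 \<gamma>) (F2 \<delta>)))))"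
    by (simp add: typing typing_ends K'.interchange)
  also have "\<dots> = vcmp K' (hcmp K' (F2 \<alpha>) (F2 \<beta>)) (vcmp K' (C2 (cmp1 K g h) (cmp1 K f k))
          (vcmp K' (F2 ?c\<^sub>1) (vcmp K' (L2 (cmp1 K g f) (cmp1 K h k)) (hcmp K' (F2 \<gamma>) (F2 \<delta>)))))"
    by (simp add: typing typing_ends bilaxity[THEN K'.vcmp_eq_extend3])
  also have "\<dots> = vcmp K' (C2 g' f')
          (vcmp K' (F2 (hcmp K \<alpha> \<beta>)) (vcmp K' (F2 ?c\<^sub>1) (vcmp K' (F2 (hcmp K \<gamma> \<delta>)) (L2 g'' k''))))"
    by (simp add: typing typing_ends lax_natural colax_natural[THEN K'.vcmp_eq_extend2])
  also have "\<dots> = vcmp K' (C2 g' f') (vcmp K' (F2 (vcmp K (hcmp K \<alpha> \<beta>) (vcmp K ?c\<^sub>1 (hcmp K \<gamma> \<delta>))))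
          (L2 g'' k''))"
    by (simp add: typing typing_ends F2_vcmp)
  finally show ?thesis .
qed

lemma bimonad_axioms_image:
  assumes b: "arr1 K b A A"
    and cells: "cell K \<mu> (cmp1 K b b) b" "cell K \<eta> (idn1 K A) b"
      "cell K \<Delta> b (cmp1 K b b)" "cell K \<epsilon> b (idn1 K A)"
    and axioms: "bimonad_axioms K A b \<mu> \<eta> \<Delta> \<epsilon> (c b b)"
  shows "bimonad_axioms K' (F0 A) (F1 b) (vcmp K' (F2 \<mu>) (L2 b b)) (vcmp K' (F2 \<eta>) (L0 A))
           (vcmp K' (C2 b b) (F2 \<Delta>)) (vcmp K' (C0 A) (F2 \<epsilon>)) (\<nu> b b)"
proof -
  note typing = b[unfolded arr1_def] cells[unfolded cell_def]
  have "vcmp K' (hcmp K' (vcmp K' (F2 \<mu>) (L2 b b)) (vcmp K' (F2 \<mu>) (L2 b b)))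
          (vcmp K' (hcmp K' (idc K' (F1 b)) (hcmp K' (\<nu> b b) (idc K' (F1 b))))
            (hcmp K' (vcmp K' (C2 b b) (F2 \<Delta>)) (vcmp K' (C2 b b) (F2 \<Delta>))))
      = vcmp K' (vcmp K' (C2 b b) (F2 \<Delta>)) (vcmp K' (F2 \<mu>) (L2 b b))"
    using bilaxity_transport[OF b b b b cells(1,1,3,3)]
    unfolding axioms[unfolded bimonad_axioms_def, THEN conjunct1]
    by (simp add: typing F2_vcmp)
  moreover have "hcmp K' (vcmp K' (C0 A) (F2 \<epsilon>)) (vcmp K' (C0 A) (F2 \<epsilon>))
      = vcmp K' (vcmp K' (C0 A) (F2 \<epsilon>)) (vcmp K' (F2 \<mu>) (L2 b b))"
    "hcmp K' (vcmp K' (F2 \<eta>) (L0 A)) (vcmp K' (F2 \<eta>) (L0 A))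
      = vcmp K' (vcmp K' (C2 b b) (F2 \<Delta>)) (vcmp K' (F2 \<eta>) (L0 A))"
    "vcmp K' (vcmp K' (C0 A) (F2 \<epsilon>)) (vcmp K' (F2 \<eta>) (L0 A)) = idc K' (idn1 K' (F0 A))"
    using axioms unfolding bimonad_axioms_def
    by (simp_all add: typing K'.interchange L0_hcmp_L0 C0_hcmp_C0 C0_vcmp_L0 lax_rules colax_rules
        colax_rules[THEN K'.vcmp_eq_extend2] F2_vcmp[symmetric, THEN K'.vcmp_eq_extend2])
  ultimately show ?thesis
    unfolding bimonad_axioms_def by blast
qed

lemma action_coaction_compatible_image:
  assumes arrows: "arr1 K b A A" "arr1 K x A B"
    and cells: "cell K \<mu> (cmp1 K b b) b" "cell K \<Delta> b (cmp1 K b b)"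
      "cell K act (cmp1 K x b) x" "cell K coact x (cmp1 K x b)"
    and compatible: "action_coaction_compatible K b \<mu> \<Delta> (c b b) x act coact"
  shows "action_coaction_compatible K' (F1 b) (vcmp K' (F2 \<mu>) (L2 b b)) (vcmp K' (C2 b b) (F2 \<Delta>))
           (\<nu> b b) (F1 x) (vcmp K' (F2 act) (L2 x b)) (vcmp K' (C2 x b) (F2 coact))"
proof -
  note typing = arrows[unfolded arr1_def] cells[unfolded cell_def]
  show ?thesis
    using bilaxity_transport[OF arrows(1,1,1,2) cells(3,1,4,2)]
    unfolding action_coaction_compatible_def compatible[unfolded action_coaction_compatible_def]
    by (simp add: typing F2_vcmp)
qed

end

theorem proposition4p18:
  fixes K :: "('o,'a,'c) twocat" and K' :: "('p,'b,'d) twocat"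
  assumes "two_category K" and "two_category K'"
    and "yb_operator K c" and "yb_operator K' c'"
    and "bilax_functor K c K' c' F0 F1 F2 L2 L0 C2 C0 \<nu>"
    and "yb_compatible K c' F1 \<nu>"
    and "right_rel_bimonad_module K c A B b \<mu> \<eta> \<Delta> \<epsilon> x act coact"
  shows "right_rel_bimonad_module K' c' (F0 A) (F0 B) (F1 b)
           (vcmp K' (F2 \<mu>) (L2 b b)) (vcmp K' (F2 \<eta>) (L0 A))
           (vcmp K' (C2 b b) (F2 \<Delta>)) (vcmp K' (C0 A) (F2 \<epsilon>))
           (F1 x) (vcmp K' (F2 act) (L2 x b)) (vcmp K' (C2 x b) (F2 coact))"
proof -
  interpret bilax_setting K K' c c' F0 F1 F2 L2 L0 C2 C0 \<nu>
    by unfold_locales (fact assms)+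
  obtain "monad K A b \<mu> \<eta>" "comonad K A b \<Delta> \<epsilon>" "bimonad_axioms K A b \<mu> \<eta> \<Delta> \<epsilon> (c b b)"
    and "arr1 K x A B" "right_module K b \<mu> \<eta> x act" "right_comodule K b \<Delta> \<epsilon> x coact"
      "action_coaction_compatible K b \<mu> \<Delta> (c b b) x act coact"
    using assms(7) unfolding right_rel_bimonad_module_iff c_bimonad_iff by blast
  moreover from this have b: "arr1 K b A A"
    and "cell K \<mu> (cmp1 K b b) b" "cell K \<eta> (idn1 K A) b"
      "cell K \<Delta> b (cmp1 K b b)" "cell K \<epsilon> b (idn1 K A)"
      "cell K act (cmp1 K x b) x" "cell K coact x (cmp1 K x b)"
    unfolding monad_def comonad_def right_module_def right_comodule_def by blast+
  moreover have "c' (F1 b) (F1 b) = \<nu> b b"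
    using assms(6) b unfolding yb_compatible_def by simp
  ultimately show ?thesis
    unfolding right_rel_bimonad_module_iff c_bimonad_iff
    by (simp add: F1_arr1 monad_image comonad_image monad_distributive_law_image
        comonad_distributive_law_image bimonad_axioms_image right_module_image right_comodule_image
        action_coaction_compatible_image)
qed

end
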